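(* In the setting of the context, suppose $\mathbf H$ admits dual Specht modules $\{S_\lambda\}_{\lambda\in\Lambda}$ and that $\mathcal R^1\mathcal G(S_\lambda)=0$ for all $\lambda\in\Lambda$. Then: (a) an $\mathbf H$-module $N$ has a dual Specht filtration if and only if $\mathcal G(N)\in\mathbf S\text{-mod}$ has a $\Delta$-filtration; (b) $\mathcal G\circ\mathcal F(M)\cong M$ for every $\mathbf S$-module $M$ with a $\Delta$-filtration.
   Context: Let $K$ be a field, $\mathbf S,\mathbf H$ finite-dimensional $K$-algebras, $e=e^2\in\mathbf S$ with $e\mathbf Se\cong\mathbf H$; modules are finite-dimensional left modules. Schur functor $\mathcal F:\mathbf S\text{-mod}\to\mathbf H\text{-mod}$, $M\mapsto eM$; inverse Schur functor $\mathcal G:\mathbf H\text{-mod}\to\mathbf S\text{-mod}$, $N\mapsto\mathrm{Hom}_{\mathbf H}(e\mathbf S,N)$ (left exact, $\mathcal F\circ\mathcal G\cong\mathrm{id}$); $\mathcal R^1\mathcal G$ is its first right derived functor. $\mathbf H$ admits dual Specht modules if: (i) there is a family of pairwise non-isomorphic $\mathbf H$-modules $\{S^\lambda\}_{\lambda\in\Lambda}$ (Specht modules) indexed by a finite poset $(\Lambda,\le)$ such that $\mathrm{Ext}^1_{\mathbf H}(S^\lambda,S^\mu)\ne0$ implies $\lambda>\mu$; (ii) there are an algebra automorphism $\#$ and an algebra anti-automorphism $*$ of $\mathbf H$ and an order-reversing involution $\lambda\mapsto\lambda^t$ of $\Lambda$ with $S_{\lambda^t}\cong(S^\lambda)^\#$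 for all $\lambda$, where $V^\#$ is $V$ with $h$ acting by $h^\#$, $V^*=\mathrm{Hom}_K(V,K)$ with $(h\cdot f)(v)=f(h^*v)$, and $S_\lambda:=(S^\lambda)^*$ is the dual Specht module. Put $\Delta(\lambda):=\mathcal G(S_\lambda)$. A dual Specht filtration of $N$ is a chain $0=N_0\subset\cdots\subset N_t=N$ with each $N_i/N_{i-1}\cong S_{\mu_i}$ for some $\mu_i\in\Lambda$; a $\Delta$-filtration is defined likewise with subquotients of the form $\Delta(\mu)$. *)

theory Defs
  imports Main "HOL-Library.Function_Algebras" "HOL-Library.Product_Plus"
begin

text \<open>A module over a K-algebra A (elements of type 'a, K-scaling sa), living in an
  ambient abelian group type 'm: carrier, K-scalar multiplication, A-action.\<close>

record ('k, 'a, 'm) modl =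
  carr :: "'m set"
  smul :: "'k \<Rightarrow> 'm \<Rightarrow> 'm"
  act  :: "'a \<Rightarrow> 'm \<Rightarrow> 'm"

definition fin_dim_on :: "('k::field \<Rightarrow> 'm::ab_group_add \<Rightarrow> 'm) \<Rightarrow> 'm set \<Rightarrow> bool" where
  "fin_dim_on sm V \<longleftrightarrow>
     (\<exists>B. finite B \<and> B \<subseteq> V \<and> (\<forall>v\<in>V. \<exists>c. v = (\<Sum>b\<in>B. sm (c b) b)))"

definition kalg :: "('k::field \<Rightarrow> 'a::ring_1 \<Rightarrow> 'a) \<Rightarrow> bool" where
  "kalg sa \<longleftrightarrow>
     (\<forall>c d x y. sa c (x + y) = sa c x + sa c y \<and> sa (c + d) x = sa c x + sa d x \<and>
        sa (c * d) x = sa c (sa d x) \<and> sa 1 x = x \<and>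
        sa c (x * y) = sa c x * y \<and> sa c (x * y) = x * sa c y)
     \<and> fin_dim_on sa UNIV"

definition is_mod :: "('k::field \<Rightarrow> 'a::ring_1 \<Rightarrow> 'a) \<Rightarrow> ('k, 'a, 'm::ab_group_add) modl \<Rightarrow> bool" where
  "is_mod sa M \<longleftrightarrow>
     0 \<in> carr M \<and> (\<forall>x\<in>carr M. \<forall>y\<in>carr M. x + y \<in> carr M) \<and> (\<forall>x\<in>carr M. - x \<in> carr M) \<and>
     (\<forall>c. \<forall>x\<in>carr M. smul M c x \<in> carr M) \<and> (\<forall>a. \<forall>x\<in>carr M. act M a x \<in> carr M) \<and>
     (\<forall>c d. \<forall>x\<in>carr M. \<forall>y\<in>carr M.
        smul M c (x + y) = smul M c x + smul M c y \<and> smul M (c + d) x = smul M c x + smul M d x \<and>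
        smul M (c * d) x = smul M c (smul M d x) \<and> smul M 1 x = x) \<and>
     (\<forall>a b c. \<forall>x\<in>carr M. \<forall>y\<in>carr M.
        act M a (x + y) = act M a x + act M a y \<and> act M (a + b) x = act M a x + act M b x \<and>
        act M (a * b) x = act M a (act M b x) \<and> act M 1 x = x \<and>
        act M (sa c a) x = smul M c (act M a x) \<and> act M a (smul M c x) = smul M c (act M a x)) \<and>
     fin_dim_on (smul M) (carr M)"

definition mod_hom :: "('k, 'a, 'm::ab_group_add) modl \<Rightarrow> ('k, 'a, 'n::ab_group_add) modl \<Rightarrow> ('m \<Rightarrow> 'n) \<Rightarrow> bool" where
  "mod_hom M N f \<longleftrightarrow>
     (\<forall>x\<in>carr M. f x \<in> carr N) \<and> (\<forall>x\<in>carr M. \<forall>y\<in>carr M. f (x + y) = f x + f y) \<and>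
     (\<forall>c. \<forall>x\<in>carr M. f (smul M c x) = smul N c (f x)) \<and>
     (\<forall>a. \<forall>x\<in>carr M. f (act M a x) = act N a (f x))"

definition mod_iso :: "('k, 'a, 'm::ab_group_add) modl \<Rightarrow> ('k, 'a, 'n::ab_group_add) modl \<Rightarrow> bool" where
  "mod_iso M N \<longleftrightarrow> (\<exists>f. mod_hom M N f \<and> bij_betw f (carr M) (carr N))"

definition sub_mod :: "('k, 'a, 'm::ab_group_add) modl \<Rightarrow> 'm set \<Rightarrow> bool" where
  "sub_mod M U \<longleftrightarrow> U \<subseteq> carr M \<and> 0 \<in> U \<and> (\<forall>x\<in>U. \<forall>y\<in>U. x + y \<in> U) \<and>
     (\<forall>c. \<forall>x\<in>U. smul M c x \<in> U) \<and> (\<forall>a. \<forall>x\<in>U. act M a x \<in> U)"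

text \<open>Ext^1_A(X, Y) is nonzero iff there is a non-split extension 0 -> Y -> E -> X -> 0
  (Yoneda description); any extension is, as a K-space, Y (+) X, so E may be taken on
  carr Y \<times> carr X with the direct-sum K-structure.\<close>
definition ext1_nonzero :: "('k::field \<Rightarrow> 'a::ring_1 \<Rightarrow> 'a) \<Rightarrow> ('k, 'a, 'x::ab_group_add) modl \<Rightarrow>
    ('k, 'a, 'y::ab_group_add) modl \<Rightarrow> bool" where
  "ext1_nonzero sa X Y \<longleftrightarrow>
     (\<exists>E :: ('k, 'a, 'y \<times> 'x) modl.
        is_mod sa E \<and> carr E = carr Y \<times> carr X \<and>
        (\<forall>c y x. smul E c (y, x) = (smul Y c y, smul X c x)) \<and>
        mod_hom Y E (\<lambda>y. (y, 0)) \<and> mod_hom E X snd \<and>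
        \<not> (\<exists>s. mod_hom X E s \<and> (\<forall>x\<in>carr X. snd (s x) = x)))"

text \<open>Filtration 0 = N_0 \<subseteq> ... \<subseteq> N_t = M by submodules with N_(i+1)/N_i \<cong> Q (\<mu>_i), \<mu>_i \<in> I
  (the subquotient isomorphism expressed as a surjective hom with kernel N_i).\<close>
definition has_filt :: "('k, 'a, 'm::ab_group_add) modl \<Rightarrow> ('i \<Rightarrow> ('k, 'a, 'q::ab_group_add) modl) \<Rightarrow>
    'i set \<Rightarrow> bool" where
  "has_filt M Q I \<longleftrightarrow>
     (\<exists>(t::nat) (Nc :: nat \<Rightarrow> 'm set) (\<mu> :: nat \<Rightarrow> 'i).
        Nc 0 = {0} \<and> Nc t = carr M \<and> (\<forall>i\<le>t. sub_mod M (Nc i)) \<and>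
        (\<forall>i<t. Nc i \<subseteq> Nc (Suc i) \<and> \<mu> i \<in> I \<and>
           (\<exists>f. mod_hom (M\<lparr>carr := Nc (Suc i)\<rparr>) (Q (\<mu> i)) f \<and>
                f ` Nc (Suc i) = carr (Q (\<mu> i)) \<and> {x \<in> Nc (Suc i). f x = 0} = Nc i)))"

definition corner_iso :: "('k::field \<Rightarrow> 's::ring_1 \<Rightarrow> 's) \<Rightarrow> ('k \<Rightarrow> 'h::ring_1 \<Rightarrow> 'h) \<Rightarrow> 's \<Rightarrow> ('h \<Rightarrow> 's) \<Rightarrow> bool" where
  "corner_iso sS sH e \<phi> \<longleftrightarrow>
     bij_betw \<phi> UNIV {e * s * e | s. True} \<and>
     (\<forall>x y c. \<phi> (x + y) = \<phi> x + \<phi> y \<and> \<phi> (x * y) = \<phi> x * \<phi> y \<and> \<phi> (sH c x) = sS c (\<phi> x)) \<and>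
     \<phi> 1 = e"

definition alg_auto :: "('k::field \<Rightarrow> 'h::ring_1 \<Rightarrow> 'h) \<Rightarrow> ('h \<Rightarrow> 'h) \<Rightarrow> bool" where
  "alg_auto sH g \<longleftrightarrow> bij g \<and> g 1 = 1 \<and>
     (\<forall>x y c. g (x + y) = g x + g y \<and> g (x * y) = g x * g y \<and> g (sH c x) = sH c (g x))"

definition alg_anti_auto :: "('k::field \<Rightarrow> 'h::ring_1 \<Rightarrow> 'h) \<Rightarrow> ('h \<Rightarrow> 'h) \<Rightarrow> bool" where
  "alg_anti_auto sH g \<longleftrightarrow> bij g \<and> g 1 = 1 \<and>
     (\<forall>x y c. g (x + y) = g x + g y \<and> g (x * y) = g y * g x \<and> g (sH c x) = sH c (g x))"

definition eS_mod :: "('k \<Rightarrow> 's::ring_1 \<Rightarrow> 's) \<Rightarrow> 's \<Rightarrow> ('h \<Rightarrow> 's) \<Rightarrow> ('k, 'h, 's) modl" where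
  "eS_mod sS e \<phi> = \<lparr>carr = {e * s | s. True}, smul = sS, act = (\<lambda>h x. \<phi> h * x)\<rparr>"

definition Fmod :: "'s \<Rightarrow> ('h \<Rightarrow> 's) \<Rightarrow> ('k, 's, 'm) modl \<Rightarrow> ('k, 'h, 'm) modl" where
  "Fmod e \<phi> M = \<lparr>carr = act M e ` carr M, smul = smul M, act = (\<lambda>h. act M (\<phi> h))\<rparr>"

text \<open>Inverse Schur functor G(N) = Hom_H(eS, N), (s.f)(x) = f(x s); maps are extended by 0.\<close>
definition Gmod :: "('k \<Rightarrow> 's::ring_1 \<Rightarrow> 's) \<Rightarrow> 's \<Rightarrow> ('h \<Rightarrow> 's) \<Rightarrow> ('k, 'h, 'n::ab_group_add) modl \<Rightarrow>
    ('k, 's, 's \<Rightarrow> 'n) modl" where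
  "Gmod sS e \<phi> N =
     \<lparr>carr = {f. mod_hom (eS_mod sS e \<phi>) N f \<and> (\<forall>x. x \<notin> {e * s | s. True} \<longrightarrow> f x = 0)},
      smul = (\<lambda>c f x. if x \<in> {e * s | s. True} then smul N c (f x) else 0),
      act = (\<lambda>s f x. if x \<in> {e * s | s. True} then f (x * s) else 0)\<rparr>"

definition dual_mod :: "('h \<Rightarrow> 'h) \<Rightarrow> ('k::field, 'h, 'v::ab_group_add) modl \<Rightarrow> ('k, 'h, 'v \<Rightarrow> 'k) modl" where
  "dual_mod st V =
     \<lparr>carr = {f. (\<forall>x\<in>carr V. \<forall>y\<in>carr V. f (x + y) = f x + f y) \<and>
                 (\<forall>c. \<forall>x\<in>carr V. f (smul V c x) = c * f x) \<and> (\<forall>x. x \<notin> carr V \<longrightarrow> f x = 0)},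
      smul = (\<lambda>c f x. if x \<in> carr V then c * f x else 0),
      act = (\<lambda>h f x. if x \<in> carr V then f (act V (st h) x) else 0)\<rparr>"

definition twist_mod :: "('h \<Rightarrow> 'h) \<Rightarrow> ('k, 'h, 'v) modl \<Rightarrow> ('k, 'h, 'v) modl" where
  "twist_mod g V = V\<lparr>act := (\<lambda>h. act V (g h))\<rparr>"

text \<open>H admits dual Specht modules: Specht modules Sp indexed by the finite poset Lam,
  automorphism hs (#), anti-automorphism hst ( * ), order-reversing involution tr (^t).\<close>
definition admits_dual_specht :: "('k::field \<Rightarrow> 'h::ring_1 \<Rightarrow> 'h) \<Rightarrow> ('l::order \<Rightarrow> ('k, 'h, 'v::ab_group_add) modl) \<Rightarrow>
    'l set \<Rightarrow> ('h \<Rightarrow> 'h) \<Rightarrow> ('h \<Rightarrow> 'h) \<Rightarrow> ('l \<Rightarrow> 'l) \<Rightarrow> bool" where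
  "admits_dual_specht sH Sp Lam hs hst tr \<longleftrightarrow>
     finite Lam \<and> (\<forall>a\<in>Lam. is_mod sH (Sp a)) \<and>
     (\<forall>a\<in>Lam. \<forall>\<mu>\<in>Lam. a \<noteq> \<mu> \<longrightarrow> \<not> mod_iso (Sp a) (Sp \<mu>)) \<and>
     (\<forall>a\<in>Lam. \<forall>\<mu>\<in>Lam. ext1_nonzero sH (Sp a) (Sp \<mu>) \<longrightarrow> a > \<mu>) \<and>
     alg_auto sH hs \<and> alg_anti_auto sH hst \<and>
     (\<forall>a\<in>Lam. tr a \<in> Lam \<and> tr (tr a) = a) \<and>
     (\<forall>a\<in>Lam. \<forall>\<mu>\<in>Lam. a \<le> \<mu> \<longrightarrow> tr \<mu> \<le> tr a) \<and>
     (\<forall>a\<in>Lam. mod_iso (dual_mod hst (Sp (tr a))) (twist_mod hs (Sp a)))"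

end

theory Submission
  imports Defs HOL.Vector_Spaces
begin

(*
  Write G N = Hom_H(eS, N). Evaluation at e is a bijection G N -> N, and it carries submodules
  and quotient maps of G N to submodules and quotient maps of N; so a Delta-filtration of G N
  evaluates to a dual Specht filtration of N.

  Conversely, applying G to a dual Specht filtration 0 = N_0 < ... < N_t = N gives the chain
  G N_i, and G N_(i+1) -> G S_mu is onto as soon as every H-map eS -> N_(i+1)/N_i lifts to
  eS -> N_(i+1). That lifting property is proved for all N_i by induction: in one layer
  A'/A = D the obstruction of a K-linear lift g is the cocycle (h, x) |-> g (h x) - h g x with
  values in D; it defines an extension of eS by D, which splits because Ext^1_H(eS, D) = 0, and
  the splitting corrects g.

  Finally, for M with a Delta-filtration the unit M -> G (F M), m |-> (x |-> x m), is
  bijective: injectivity and surjectivity are proved by induction along the filtration, peeling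
  off one layer G D at a time (a five-lemma argument; no Ext condition is needed here).
*)

lemma is_modD:
  assumes "is_mod sa M"
  shows mod_zero: "0 \<in> carr M"
    and mod_add: "\<And>x y. x \<in> carr M \<Longrightarrow> y \<in> carr M \<Longrightarrow> x + y \<in> carr M"
    and mod_neg: "\<And>x. x \<in> carr M \<Longrightarrow> - x \<in> carr M"
    and mod_smul: "\<And>c x. x \<in> carr M \<Longrightarrow> smul M c x \<in> carr M"
    and mod_act: "\<And>a x. x \<in> carr M \<Longrightarrow> act M a x \<in> carr M"
    and smul_add: "\<And>c x y. x \<in> carr M \<Longrightarrow> y \<in> carr M \<Longrightarrow> smul M c (x + y) = smul M c x + smul M c y"
    and smul_adds: "\<And>c d x. x \<in> carr M \<Longrightarrow> smul M (c + d) x = smul M c x + smul M d x"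
    and smul_mult: "\<And>c d x. x \<in> carr M \<Longrightarrow> smul M (c * d) x = smul M c (smul M d x)"
    and smul_one: "\<And>x. x \<in> carr M \<Longrightarrow> smul M 1 x = x"
    and act_add: "\<And>a x y. x \<in> carr M \<Longrightarrow> y \<in> carr M \<Longrightarrow> act M a (x + y) = act M a x + act M a y"
    and act_adds: "\<And>a b x. x \<in> carr M \<Longrightarrow> act M (a + b) x = act M a x + act M b x"
    and act_mult: "\<And>a b x. x \<in> carr M \<Longrightarrow> act M (a * b) x = act M a (act M b x)"
    and act_one: "\<And>x. x \<in> carr M \<Longrightarrow> act M 1 x = x"
    and act_sa: "\<And>a c x. x \<in> carr M \<Longrightarrow> act M (sa c a) x = smul M c (act M a x)"
    and act_smul: "\<And>a c x. x \<in> carr M \<Longrightarrow> act M a (smul M c x) = smul M c (act M a x)"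
    and mod_fin_dim: "fin_dim_on (smul M) (carr M)"
  using assms unfolding is_mod_def by blast+

lemma mod_diff: "is_mod sa M \<Longrightarrow> x \<in> carr M \<Longrightarrow> y \<in> carr M \<Longrightarrow> x - y \<in> carr M"
  by (metis diff_conv_add_uminus mod_add mod_neg)

lemma act_zero: "is_mod sa M \<Longrightarrow> act M a 0 = 0"
  using act_add[of sa M 0 0 a] mod_zero[of sa M] by simp

lemma act_uminus: "is_mod sa M \<Longrightarrow> x \<in> carr M \<Longrightarrow> act M a (- x) = - act M a x"
  using act_add[of sa M x "- x" a] mod_neg[of sa M x] act_zero[of sa M a]
  by (simp add: eq_neg_iff_add_eq_0 add.commute)

lemma act_diff: "is_mod sa M \<Longrightarrow> x \<in> carr M \<Longrightarrow> y \<in> carr M \<Longrightarrow> act M a (x - y) = act M a x - act M a y"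
  by (metis act_add act_uminus mod_neg diff_conv_add_uminus)

lemma smul_zero: "is_mod sa M \<Longrightarrow> smul M c 0 = 0"
  using smul_add[of sa M 0 0 c] mod_zero[of sa M] by simp

lemma smul_zero_left: "is_mod sa M \<Longrightarrow> x \<in> carr M \<Longrightarrow> smul M 0 x = 0"
  using smul_adds[of sa M x 0 0] by simp

lemma smul_minus_one: "is_mod sa M \<Longrightarrow> x \<in> carr M \<Longrightarrow> smul M (-1) x = - x"
  using smul_adds[of sa M x "-1" 1] smul_one[of sa M x] smul_zero_left[of sa M x]
  by (simp add: eq_neg_iff_add_eq_0 add.commute)

lemma smul_uminus: "is_mod sa M \<Longrightarrow> x \<in> carr M \<Longrightarrow> smul M c (- x) = - smul M c x"
  using smul_add[of sa M x "- x" c] mod_neg[of sa M x] smul_zero[of sa M c]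
  by (simp add: eq_neg_iff_add_eq_0 add.commute)

lemma smul_diff: "is_mod sa M \<Longrightarrow> x \<in> carr M \<Longrightarrow> y \<in> carr M \<Longrightarrow> smul M c (x - y) = smul M c x - smul M c y"
  by (metis smul_add smul_uminus mod_neg diff_conv_add_uminus)

lemma smul_comm: "is_mod sa M \<Longrightarrow> x \<in> carr M \<Longrightarrow> smul M c (smul M d x) = smul M d (smul M c x)"
  by (metis smul_mult mult.commute)

lemma smul_sum:
  assumes "is_mod sa M" "finite A" "\<And>i. i \<in> A \<Longrightarrow> f i \<in> carr M"
  shows "smul M c (\<Sum>i\<in>A. f i) = (\<Sum>i\<in>A. smul M c (f i)) \<and> (\<Sum>i\<in>A. f i) \<in> carr M"
  using assms(2,3)
proof (induction A rule: finite_induct)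
  case empty then show ?case using assms(1) by (simp add: smul_zero mod_zero)
next
  case (insert x F) then show ?case using smul_add[OF assms(1)] mod_add[OF assms(1)] by simp
qed

lemma sub_modD:
  assumes "sub_mod M U"
  shows sub_mod_carr: "U \<subseteq> carr M" and sub_mod_zero: "0 \<in> U"
    and sub_mod_add: "\<And>x y. x \<in> U \<Longrightarrow> y \<in> U \<Longrightarrow> x + y \<in> U"
    and sub_mod_smul: "\<And>c x. x \<in> U \<Longrightarrow> smul M c x \<in> U"
    and sub_mod_act: "\<And>a x. x \<in> U \<Longrightarrow> act M a x \<in> U"
  using assms unfolding sub_mod_def by blast+

lemma sub_mod_neg: "is_mod sa M \<Longrightarrow> sub_mod M U \<Longrightarrow> x \<in> U \<Longrightarrow> - x \<in> U"
  by (metis sub_mod_carr sub_mod_smul smul_minus_one[of sa M x] subsetD)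

lemma sub_mod_diff: "is_mod sa M \<Longrightarrow> sub_mod M U \<Longrightarrow> x \<in> U \<Longrightarrow> y \<in> U \<Longrightarrow> x - y \<in> U"
  by (metis diff_conv_add_uminus sub_mod_add sub_mod_neg)

lemma sub_mod_sum: assumes "sub_mod M U" "\<And>i. i \<in> A \<Longrightarrow> f i \<in> U" shows "(\<Sum>i\<in>A. f i) \<in> U"
proof (cases "finite A")
  case True thus ?thesis using assms(2)
    by (induction A rule: finite_induct) (auto simp: sub_modD[OF assms(1)])
qed (simp add: sub_mod_zero[OF assms(1)])

lemma additive_zero:
  fixes f :: "'a::ab_group_add \<Rightarrow> 'b::ab_group_add"
  assumes "\<forall>x\<in>U. \<forall>y\<in>U. f (x + y) = f x + f y" "0 \<in> U"
  shows "f 0 = 0"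
proof -
  have "f (0 + 0) = f 0 + f 0" using assms by blast
  thus ?thesis by simp
qed

lemma additive_diff:
  fixes f :: "'a::ab_group_add \<Rightarrow> 'b::ab_group_add"
  assumes "\<forall>x\<in>U. \<forall>y\<in>U. f (x + y) = f x + f y" "a \<in> U" "b \<in> U" "a - b \<in> U"
  shows "f (a - b) = f a - f b"
proof -
  have "f (a - b) + f b = f (a - b + b)" using assms by metis
  thus ?thesis by (simp add: eq_diff_eq)
qed

definition kspace_on :: "('k::field \<Rightarrow> 'v::ab_group_add \<Rightarrow> 'v) \<Rightarrow> 'v set \<Rightarrow> bool" where
  "kspace_on sm V \<longleftrightarrow> 0 \<in> V \<and> (\<forall>x\<in>V. \<forall>y\<in>V. x + y \<in> V) \<and> (\<forall>c. \<forall>x\<in>V. sm c x \<in> V) \<and>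
     (\<forall>c d. \<forall>x\<in>V. \<forall>y\<in>V. sm c (x + y) = sm c x + sm c y \<and> sm (c + d) x = sm c x + sm d x \<and>
        sm (c * d) x = sm c (sm d x) \<and> sm 1 x = x)"

lemma is_mod_kspace_on: "is_mod sa M \<Longrightarrow> kspace_on (smul M) (carr M)"
  unfolding kspace_on_def is_mod_def by blast

lemma kspace_on_sum:
  assumes "kspace_on sm V" "\<And>i. i \<in> A \<Longrightarrow> f i \<in> V"
  shows "(\<Sum>i\<in>A. f i) \<in> V"
proof (cases "finite A")
  case True thus ?thesis using assms(2)
    by (induction A rule: finite_induct) (use assms(1) in \<open>auto simp: kspace_on_def\<close>)
qed (use assms(1) in \<open>simp add: kspace_on_def\<close>)

lemma kspace_on_sum_smul:
  assumes V: "kspace_on sm V" and x: "x \<in> V"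
  shows "sm (\<Sum>i\<in>A. c i) x = (\<Sum>i\<in>A. sm (c i) x)"
proof -
  have zero: "sm 0 x = 0"
    using V x unfolding kspace_on_def by (metis add.right_neutral add_cancel_right_right)
  show ?thesis
  proof (cases "finite A")
    case True
    then show ?thesis
      by (induction A rule: finite_induct) (use V x zero in \<open>auto simp: kspace_on_def\<close>)
  qed (simp add: zero)
qed

lemma fin_dim_on_image:
  assumes V: "kspace_on sm V" and W: "kspace_on sn W" and fd: "fin_dim_on sm V"
    and LW: "\<And>x. x \<in> V \<Longrightarrow> L x \<in> W"
    and L_add: "\<And>x y. x \<in> V \<Longrightarrow> y \<in> V \<Longrightarrow> L (x + y) = L x + L y"
    and L_smul: "\<And>c x. x \<in> V \<Longrightarrow> L (sm c x) = sn c (L x)"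
  shows "fin_dim_on sn (L ` V)"
proof -
  obtain B where B: "finite B" "B \<subseteq> V" "\<forall>v\<in>V. \<exists>c. v = (\<Sum>b\<in>B. sm (c b) b)"
    using fd unfolding fin_dim_on_def by blast
  have L_sum: "L (\<Sum>i\<in>A. f i) = (\<Sum>i\<in>A. L (f i))" if "finite A" "\<And>i. i \<in> A \<Longrightarrow> f i \<in> V" for A f
    using that
  proof (induction A rule: finite_induct)
    case empty
    show ?case using additive_zero[of V L] L_add V unfolding kspace_on_def by simp
  next
    case (insert a F)
    have "(\<Sum>i\<in>F. f i) \<in> V" using insert by (intro kspace_on_sum[OF V]) auto
    thus ?case using insert L_add by simp
  qed
  have "\<exists>c. w = (\<Sum>b'\<in>L ` B. sn (c b') b')" if "w \<in> L ` V" for w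
  proof -
    obtain v where w: "w = L v" and v: "v \<in> V" using \<open>w \<in> L ` V\<close> by blast
    obtain c where c: "v = (\<Sum>b\<in>B. sm (c b) b)" using B v by blast
    have BV: "b \<in> B \<Longrightarrow> b \<in> V" for b using B by blast
    have "w = (\<Sum>b\<in>B. sn (c b) (L b))"
      unfolding w c using L_sum[OF B(1)] L_smul BV V unfolding kspace_on_def by simp
    also have "\<dots> = (\<Sum>b'\<in>L ` B. \<Sum>b\<in>{b \<in> B. L b = b'}. sn (c b) (L b))"
      by (rule sum.image_gen[OF B(1)])
    also have "\<dots> = (\<Sum>b'\<in>L ` B. sn (\<Sum>b\<in>{b \<in> B. L b = b'}. c b) b')"
    proof (intro sum.cong refl)
      fix b' assume b': "b' \<in> L ` B"
      have "(\<Sum>b\<in>{b \<in> B. L b = b'}. sn (c b) (L b)) = (\<Sum>b\<in>{b \<in> B. L b = b'}. sn (c b) b')"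
        by (rule sum.cong) auto
      also have "\<dots> = sn (\<Sum>b\<in>{b \<in> B. L b = b'}. c b) b'"
        using b' LW BV kspace_on_sum_smul[OF W, of b' c] by auto
      finally show "(\<Sum>b\<in>{b \<in> B. L b = b'}. sn (c b) (L b)) = sn (\<Sum>b\<in>{b \<in> B. L b = b'}. c b) b'" .
    qed
    finally show ?thesis by (rule exI[where x = "\<lambda>b'. \<Sum>b\<in>{b \<in> B. L b = b'}. c b"])
  qed
  then show ?thesis
    unfolding fin_dim_on_def using B by (intro exI[of _ "L ` B"]) auto
qed

lemma mod_hom_the_inv_into:
  assumes f: "mod_hom M N f" and bij: "bij_betw f (carr M) (carr N)"
    and add: "\<forall>x\<in>carr M. \<forall>y\<in>carr M. x + y \<in> carr M"
    and smul: "\<forall>c. \<forall>x\<in>carr M. smul M c x \<in> carr M"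
    and act: "\<forall>a. \<forall>x\<in>carr M. act M a x \<in> carr M"
  shows "mod_hom N M (the_inv_into (carr M) f)"
proof -
  let ?g = "the_inv_into (carr M) f"
  have inj: "inj_on f (carr M)" using bij by (rule bij_betw_imp_inj_on)
  have g: "y \<in> carr N \<Longrightarrow> ?g y \<in> carr M \<and> f (?g y) = y" for y
    using bij by (metis bij_betw_def f_the_inv_into_f the_inv_into_into order_refl)
  have gf: "x \<in> carr M \<Longrightarrow> ?g (f x) = x" for x by (rule the_inv_into_f_f[OF inj])
  show ?thesis
    unfolding mod_hom_def
  proof (intro conjI ballI allI)
    fix y assume y: "y \<in> carr N"
    show "?g y \<in> carr M" using g[OF y] by blast
    show "?g (smul N c y) = smul M c (?g y)" for c
      using f g[OF y] gf smul unfolding mod_hom_def by metis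
    show "?g (act N a y) = act M a (?g y)" for a
      using f g[OF y] gf act unfolding mod_hom_def by metis
    fix z assume z: "z \<in> carr N"
    show "?g (y + z) = ?g y + ?g z"
      using f g[OF y] g[OF z] gf add unfolding mod_hom_def by metis
  qed
qed

definition quotient_map :: "('k, 'a, 'm::ab_group_add) modl \<Rightarrow> 'm set \<Rightarrow> 'm set \<Rightarrow>
    ('k, 'a, 'q::ab_group_add) modl \<Rightarrow> ('m \<Rightarrow> 'q) \<Rightarrow> bool" where
  "quotient_map M A A' Q f \<longleftrightarrow>
     mod_hom (M\<lparr>carr := A'\<rparr>) Q f \<and> f ` A' = carr Q \<and> {x \<in> A'. f x = 0} = A"

lemma quotient_mapD:
  assumes "quotient_map M A A' Q f"
  shows quotient_map_carr: "\<And>x. x \<in> A' \<Longrightarrow> f x \<in> carr Q"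
    and quotient_map_add: "\<And>x y. x \<in> A' \<Longrightarrow> y \<in> A' \<Longrightarrow> f (x + y) = f x + f y"
    and quotient_map_smul: "\<And>c x. x \<in> A' \<Longrightarrow> f (smul M c x) = smul Q c (f x)"
    and quotient_map_act: "\<And>a x. x \<in> A' \<Longrightarrow> f (act M a x) = act Q a (f x)"
    and quotient_map_image: "f ` A' = carr Q"
    and quotient_map_kernel: "\<And>x. x \<in> A' \<Longrightarrow> f x = 0 \<longleftrightarrow> x \<in> A"
    and quotient_map_subset: "A \<subseteq> A'"
  using assms unfolding quotient_map_def mod_hom_def by auto

lemma quotient_map_zero: "quotient_map M A A' Q f \<Longrightarrow> sub_mod M A' \<Longrightarrow> f 0 = 0"
  by (meson additive_zero quotient_map_add sub_mod_zero)

lemma quotient_map_diff: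
  "is_mod sa M \<Longrightarrow> sub_mod M A' \<Longrightarrow> quotient_map M A A' Q f \<Longrightarrow> x \<in> A' \<Longrightarrow> y \<in> A' \<Longrightarrow>
     f (x - y) = f x - f y"
  by (meson additive_diff quotient_map_add sub_mod_diff)

lemma mod_hom_restrict:
  "mod_hom (M\<lparr>carr := U\<rparr>) Q f \<longleftrightarrow>
     (\<forall>x\<in>U. f x \<in> carr Q) \<and> (\<forall>x\<in>U. \<forall>y\<in>U. f (x + y) = f x + f y) \<and>
     (\<forall>c. \<forall>x\<in>U. f (smul M c x) = smul Q c (f x)) \<and> (\<forall>a. \<forall>x\<in>U. f (act M a x) = act Q a (f x))"
  unfolding mod_hom_def by simp

lemma quotient_mapI:
  assumes "\<And>x. x \<in> A' \<Longrightarrow> f x \<in> carr Q"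
    and "\<And>x y. x \<in> A' \<Longrightarrow> y \<in> A' \<Longrightarrow> f (x + y) = f x + f y"
    and "\<And>c x. x \<in> A' \<Longrightarrow> f (smul M c x) = smul Q c (f x)"
    and "\<And>a x. x \<in> A' \<Longrightarrow> f (act M a x) = act Q a (f x)"
    and "carr Q \<subseteq> f ` A'" and "A \<subseteq> A'" and "\<And>x. x \<in> A' \<Longrightarrow> f x = 0 \<longleftrightarrow> x \<in> A"
  shows "quotient_map M A A' Q f"
  unfolding quotient_map_def mod_hom_restrict using assms by blast

definition filtration :: "('k, 'a, 'm::ab_group_add) modl \<Rightarrow> ('i \<Rightarrow> ('k, 'a, 'q::ab_group_add) modl) \<Rightarrow>
    'i set \<Rightarrow> nat \<Rightarrow> (nat \<Rightarrow> 'm set) \<Rightarrow> (nat \<Rightarrow> 'i) \<Rightarrow> bool" where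
  "filtration M Q I t Nc \<mu> \<longleftrightarrow>
     Nc 0 = {0} \<and> Nc t = carr M \<and> (\<forall>i\<le>t. sub_mod M (Nc i)) \<and>
     (\<forall>i<t. Nc i \<subseteq> Nc (Suc i) \<and> \<mu> i \<in> I \<and> (\<exists>f. quotient_map M (Nc i) (Nc (Suc i)) (Q (\<mu> i)) f))"

lemma has_filt_iff_filtration: "has_filt M Q I \<longleftrightarrow> (\<exists>t Nc \<mu>. filtration M Q I t Nc \<mu>)"
  unfolding has_filt_def filtration_def quotient_map_def by blast

lemma filtrationD:
  assumes "filtration M Q I t Nc \<mu>"
  shows filtration_bot: "Nc 0 = {0}" and filtration_top: "Nc t = carr M"
    and filtration_sub_mod: "\<And>i. i \<le> t \<Longrightarrow> sub_mod M (Nc i)"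
    and filtration_index: "\<And>i. i < t \<Longrightarrow> \<mu> i \<in> I"
    and filtration_step: "\<And>i. i < t \<Longrightarrow> \<exists>f. quotient_map M (Nc i) (Nc (Suc i)) (Q (\<mu> i)) f"
  using assms unfolding filtration_def by auto

section \<open>Dual modules\<close>

lemma dual_simps:
  "smul (dual_mod st V) c f = (\<lambda>x. if x \<in> carr V then c * f x else 0)"
  "act (dual_mod st V) h f = (\<lambda>x. if x \<in> carr V then f (act V (st h) x) else 0)"
  "f \<in> carr (dual_mod st V) \<longleftrightarrow> (\<forall>x\<in>carr V. \<forall>y\<in>carr V. f (x + y) = f x + f y) \<and>
     (\<forall>c. \<forall>x\<in>carr V. f (smul V c x) = c * f x) \<and> (\<forall>x. x \<notin> carr V \<longrightarrow> f x = 0)"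
  unfolding dual_mod_def by simp_all

lemma kspace_on_dual:
  assumes V: "is_mod sa V"
  shows "kspace_on (smul (dual_mod st V)) (carr (dual_mod st V))"
  unfolding kspace_on_def dual_simps
  using mod_add[OF V] mod_smul[OF V] by (auto simp: algebra_simps dual_simps(3) intro!: ext)

lemma dual_act_closed:
  assumes V: "is_mod sa V" and f: "f \<in> carr (dual_mod st V)"
  shows "act (dual_mod st V) h f \<in> carr (dual_mod st V)"
  using f mod_add[OF V] mod_smul[OF V] mod_act[OF V] act_add[OF V] act_smul[OF V]
  unfolding dual_simps by auto

lemma fin_dim_dual_of_iso:
  fixes V W :: "('k::field, 'h::ring_1, 'v::ab_group_add) modl"
  assumes W: "is_mod sa W" and V: "is_mod sa V" and iso: "mod_iso (dual_mod st V) (twist_mod hs W)"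
  shows "fin_dim_on (smul (dual_mod st V)) (carr (dual_mod st V))"
proof -
  let ?V' = "dual_mod st V"
  have tw: "carr (twist_mod hs W) = carr W" "smul (twist_mod hs W) = smul W"
    unfolding twist_mod_def by simp_all
  obtain f where f: "mod_hom ?V' (twist_mod hs W) f" and bij: "bij_betw f (carr ?V') (carr (twist_mod hs W))"
    using iso unfolding mod_iso_def by blast
  let ?L = "the_inv_into (carr ?V') f"
  have "mod_hom (twist_mod hs W) ?V' ?L"
    by (rule mod_hom_the_inv_into[OF f bij])
      (use kspace_on_dual[OF V, of st] dual_act_closed[OF V] in \<open>simp_all add: kspace_on_def\<close>)
  note L = this[unfolded mod_hom_def tw]
  have "fin_dim_on (smul ?V') (?L ` carr W)"
    by (rule fin_dim_on_image[OF is_mod_kspace_on[OF W] kspace_on_dual[OF V] mod_fin_dim[OF W]])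
      (use L in simp_all)
  moreover have "?L ` carr W = carr ?V'"
    using bij_betw_the_inv_into[OF bij] by (simp add: bij_betw_def tw)
  ultimately show ?thesis by simp
qed

lemma dual_is_mod:
  assumes V: "is_mod sH V" and anti: "alg_anti_auto sH st"
    and fd: "fin_dim_on (smul (dual_mod st V)) (carr (dual_mod st V))"
  shows "is_mod sH (dual_mod st V)"
proof -
  have st: "st (x + y) = st x + st y" "st (x * y) = st y * st x" "st (sH c x) = sH c (st x)" "st 1 = 1"
    for x y c using anti unfolding alg_anti_auto_def by auto
  show ?thesis
    unfolding is_mod_def
    using kspace_on_dual[OF V, of st, unfolded kspace_on_def] fd mod_add[OF V] mod_smul[OF V]
      mod_act[OF V] act_add[OF V] act_adds[OF V] act_mult[OF V] act_one[OF V] act_sa[OF V]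
      act_smul[OF V]
    by (auto simp: algebra_simps dual_simps st intro!: ext)
qed

lemma is_mod_dual_specht:
  assumes "admits_dual_specht sH Sp Lam hs hst tr" and \<mu>: "\<mu> \<in> Lam"
  shows "is_mod sH (dual_mod hst (Sp \<mu>))"
proof -
  have Sp: "\<forall>a\<in>Lam. is_mod sH (Sp a)" and anti: "alg_anti_auto sH hst"
    and tr: "\<forall>a\<in>Lam. tr a \<in> Lam \<and> tr (tr a) = a"
    and iso: "\<forall>a\<in>Lam. mod_iso (dual_mod hst (Sp (tr a))) (twist_mod hs (Sp a))"
    using assms(1) unfolding admits_dual_specht_def by simp_all
  have tr\<mu>: "tr \<mu> \<in> Lam" "tr (tr \<mu>) = \<mu>" using tr \<mu> by auto
  have "mod_iso (dual_mod hst (Sp \<mu>)) (twist_mod hs (Sp (tr \<mu>)))"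
    using iso[rule_format, OF tr\<mu>(1)] tr\<mu>(2) by simp
  moreover have "is_mod sH (Sp \<mu>)" "is_mod sH (Sp (tr \<mu>))" using Sp \<mu> tr\<mu>(1) by auto
  ultimately show ?thesis by (intro dual_is_mod[OF _ anti fin_dim_dual_of_iso])
qed

locale schur =
  fixes sS :: "'k::field \<Rightarrow> 's::ring_1 \<Rightarrow> 's" and sH :: "'k \<Rightarrow> 'h::ring_1 \<Rightarrow> 'h"
    and e :: 's and \<phi> :: "'h \<Rightarrow> 's"
  assumes kalg_S: "kalg sS" and idem: "e * e = e" and corner: "corner_iso sS sH e \<phi>"
begin

definition ES :: "'s set" where "ES = {e * s | s. True}"

lemma ES_iff: "x \<in> ES \<longleftrightarrow> e * x = x"
  unfolding ES_def by (auto simp: mult.assoc[symmetric] idem) (metis)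

lemma sS_simps: "sS c (x + y) = sS c x + sS c y" "sS (c + d) x = sS c x + sS d x"
  "sS (c * d) x = sS c (sS d x)" "sS 1 x = x" "sS c (x * y) = sS c x * y" "sS c (x * y) = x * sS c y"
  using kalg_S unfolding kalg_def by blast+

sublocale VS: vector_space sS
  by unfold_locales (simp_all add: sS_simps(1,2,4) sS_simps(3)[symmetric])

lemma phi_add: "\<phi> (x + y) = \<phi> x + \<phi> y" and phi_mult: "\<phi> (x * y) = \<phi> x * \<phi> y"
  and phi_smul: "\<phi> (sH c x) = sS c (\<phi> x)" and phi_one: "\<phi> 1 = e"
  and phi_bij: "bij_betw \<phi> UNIV {e * s * e | s. True}"
  using corner unfolding corner_iso_def by blast+

lemma phi_e: "e * \<phi> h = \<phi> h" "\<phi> h * e = \<phi> h"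
proof -
  obtain s where "\<phi> h = e * s * e" using phi_bij unfolding bij_betw_def by blast
  thus "e * \<phi> h = \<phi> h" "\<phi> h * e = \<phi> h"
    by (simp_all add: mult.assoc[symmetric] idem) (simp add: mult.assoc idem)
qed

lemma ES_closed:
  shows ES_zero: "0 \<in> ES" and ES_add: "x \<in> ES \<Longrightarrow> y \<in> ES \<Longrightarrow> x + y \<in> ES"
    and ES_uminus: "x \<in> ES \<Longrightarrow> - x \<in> ES" and ES_smul: "x \<in> ES \<Longrightarrow> sS c x \<in> ES"
    and ES_phi_mult: "x \<in> ES \<Longrightarrow> \<phi> h * x \<in> ES" and ES_mult_right: "x \<in> ES \<Longrightarrow> x * s \<in> ES"
    and e_in_ES: "e \<in> ES"
  by (simp_all only: ES_iff)
    (simp_all add: distrib_left sS_simps(6)[symmetric] mult.assoc[symmetric] phi_e idem)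

lemma ES_sum: "(\<And>i. i \<in> F \<Longrightarrow> f i \<in> ES) \<Longrightarrow> (\<Sum>i\<in>F. f i) \<in> ES"
  by (simp add: ES_iff sum_distrib_left)

lemma ES_finite_basis: "\<exists>B. finite B \<and> B \<subseteq> ES \<and> VS.independent B \<and> ES \<subseteq> VS.span B"
proof -
  obtain B0 where B0: "finite B0" "\<forall>v. \<exists>c. v = (\<Sum>b\<in>B0. sS (c b) b)"
    using kalg_S unfolding kalg_def fin_dim_on_def by auto
  have span: "ES \<subseteq> VS.span ((\<lambda>b. e * b) ` B0)"
  proof
    fix x assume "x \<in> ES"
    then obtain s where x: "x = e * s" unfolding ES_def by auto
    obtain c where s: "s = (\<Sum>b\<in>B0. sS (c b) b)" using B0 by auto
    have "x = (\<Sum>b\<in>B0. sS (c b) (e * b))" unfolding x s by (simp add: sum_distrib_left sS_simps(6))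
    also have "\<dots> \<in> VS.span ((\<lambda>b. e * b) ` B0)"
      by (intro VS.span_sum VS.span_scale VS.span_base) auto
    finally show "x \<in> VS.span ((\<lambda>b. e * b) ` B0)" .
  qed
  obtain B where B: "B \<subseteq> ES" "VS.independent B" "ES \<subseteq> VS.span B"
    using VS.basis_exists[of ES] by metis
  have "B \<subseteq> VS.span ((\<lambda>b. e * b) ` B0)" using B(1) span by blast
  then have "finite B" using VS.independent_span_bound[OF _ B(2)] B0(1) by blast
  thus ?thesis using B by blast
qed

definition EB :: "'s set" where
  "EB = (SOME B. finite B \<and> B \<subseteq> ES \<and> VS.independent B \<and> ES \<subseteq> VS.span B)"

lemma EB: "finite EB" "EB \<subseteq> ES" "VS.independent EB" "ES \<subseteq> VS.span EB"
  using someI_ex[OF ES_finite_basis] unfolding EB_def by simp_all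

abbreviation rep :: "'s \<Rightarrow> 's \<Rightarrow> 'k" where "rep x b \<equiv> VS.representation EB x b"

lemma ES_span: "x \<in> ES \<Longrightarrow> x \<in> VS.span EB" using EB(4) by (rule subsetD)

lemma ES_expand: "x \<in> ES \<Longrightarrow> x = (\<Sum>b\<in>EB. sS (rep x b) b)"
  using VS.sum_representation_eq[OF EB(3) ES_span EB(1) order_refl] by simp

lemma rep_add: "x \<in> ES \<Longrightarrow> y \<in> ES \<Longrightarrow> rep (x + y) b = rep x b + rep y b"
  using VS.representation_add[OF EB(3) ES_span ES_span] by simp

lemma rep_smul: "x \<in> ES \<Longrightarrow> rep (sS c x) b = c * rep x b"
  using VS.representation_scale[OF EB(3) ES_span] by simp

lemma rep_basis: "b' \<in> EB \<Longrightarrow> rep b' b = (if b = b' then 1 else 0)"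
  using VS.representation_basis[OF EB(3)] by simp

definition klin :: "('k, 'x, 'n::ab_group_add) modl \<Rightarrow> 'n set \<Rightarrow> ('s \<Rightarrow> 'n) \<Rightarrow> bool" where
  "klin N U L \<longleftrightarrow> (\<forall>x\<in>ES. L x \<in> U) \<and> (\<forall>x\<in>ES. \<forall>y\<in>ES. L (x + y) = L x + L y) \<and>
     (\<forall>c. \<forall>x\<in>ES. L (sS c x) = smul N c (L x))"

lemma klinD:
  assumes "klin N U L"
  shows klin_in: "\<And>x. x \<in> ES \<Longrightarrow> L x \<in> U"
    and klin_add: "\<And>x y. x \<in> ES \<Longrightarrow> y \<in> ES \<Longrightarrow> L (x + y) = L x + L y"
    and klin_smul: "\<And>c x. x \<in> ES \<Longrightarrow> L (sS c x) = smul N c (L x)"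
  using assms unfolding klin_def by blast+

lemma klin_mono: "klin N U L \<Longrightarrow> U \<subseteq> U' \<Longrightarrow> klin N U' L"
  unfolding klin_def by blast

lemma klin_zero: "klin N U L \<Longrightarrow> L 0 = 0"
  using additive_zero[of ES L] ES_zero unfolding klin_def by blast

lemma klin_diff:
  assumes N: "is_mod sa N" and U: "sub_mod N U" and f: "klin N U f" and g: "klin N U g"
  shows "klin N U (\<lambda>x. f x - g x)"
  unfolding klin_def
proof (intro conjI ballI allI)
  fix x assume x: "x \<in> ES"
  have fN: "f x \<in> carr N" and gN: "g x \<in> carr N"
    using klin_in[OF f x] klin_in[OF g x] sub_mod_carr[OF U] by auto
  show "f x - g x \<in> U" using sub_mod_diff[OF N U klin_in[OF f x] klin_in[OF g x]] .
  show "f (sS c x) - g (sS c x) = smul N c (f x - g x)" for c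
    using klin_smul[OF f x] klin_smul[OF g x] smul_diff[OF N fN gN] by simp
  fix y assume y: "y \<in> ES"
  show "f (x + y) - g (x + y) = f x - g x + (f y - g y)"
    using klin_add[OF f x y] klin_add[OF g x y] by simp
qed

lemma klin_quotient_map:
  assumes "klin M A' L" "quotient_map M A A' Q f"
  shows "klin Q (carr Q) (\<lambda>x. f (L x))"
  using assms unfolding klin_def quotient_map_def mod_hom_def by simp

lemma klin_expand:
  assumes L: "klin N U L" and x: "x \<in> ES"
  shows "L x = (\<Sum>b\<in>EB. smul N (rep x b) (L b))"
proof -
  have bES: "b \<in> EB \<Longrightarrow> b \<in> ES" for b using EB(2) by blast
  have sum: "L (\<Sum>i\<in>F. f i) = (\<Sum>i\<in>F. L (f i))" if "finite F" "\<And>i. i \<in> F \<Longrightarrow> f i \<in> ES" for F f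
    using that by (induction F rule: finite_induct) (simp_all add: klin_zero[OF L] klin_add[OF L] ES_sum)
  have "L x = L (\<Sum>b\<in>EB. sS (rep x b) b)" using ES_expand[OF x] by simp
  also have "\<dots> = (\<Sum>b\<in>EB. L (sS (rep x b) b))" by (rule sum[OF EB(1) ES_smul[OF bES]])
  also have "\<dots> = (\<Sum>b\<in>EB. smul N (rep x b) (L b))" using klin_smul[OF L] bES by simp
  finally show ?thesis .
qed

lemma klin_unique:
  "klin N U L1 \<Longrightarrow> klin N U' L2 \<Longrightarrow> (\<And>b. b \<in> EB \<Longrightarrow> L1 b = L2 b) \<Longrightarrow> x \<in> ES \<Longrightarrow> L1 x = L2 x"
  using klin_expand[of N U L1 x] klin_expand[of N U' L2 x] by simp

definition lext :: "('k, 'x, 'n::ab_group_add) modl \<Rightarrow> ('s \<Rightarrow> 'n) \<Rightarrow> 's \<Rightarrow> 'n" where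
  "lext N w x = (\<Sum>b\<in>EB. smul N (rep x b) (w b))"

lemma lext_klin:
  assumes N: "is_mod sa N" and U: "sub_mod N U" and w: "\<And>b. b \<in> EB \<Longrightarrow> w b \<in> U"
  shows "klin N U (lext N w)"
  unfolding klin_def
proof (intro conjI ballI allI)
  have wN: "b \<in> EB \<Longrightarrow> w b \<in> carr N" for b using w sub_mod_carr[OF U] by blast
  show "lext N w x \<in> U" for x unfolding lext_def using w by (intro sub_mod_sum[OF U] sub_mod_smul[OF U])
  show "lext N w (x + y) = lext N w x + lext N w y" if "x \<in> ES" "y \<in> ES" for x y
    unfolding lext_def rep_add[OF that] sum.distrib[symmetric] by (simp add: smul_adds[OF N] wN)
  show "lext N w (sS c x) = smul N c (lext N w x)" if "x \<in> ES" for c x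
    unfolding lext_def rep_smul[OF that] using wN smul_sum[OF N EB(1)]
    by (simp add: smul_mult[OF N] mod_smul[OF N])
qed

lemma lext_basis:
  assumes N: "is_mod sa N" and w: "\<And>b. b \<in> EB \<Longrightarrow> w b \<in> carr N" and b: "b \<in> EB"
  shows "lext N w b = w b"
proof -
  have "lext N w b = (\<Sum>b'\<in>EB. if b' = b then w b else 0)"
    unfolding lext_def rep_basis[OF b]
    by (intro sum.cong refl) (auto simp: smul_one[OF N] smul_zero_left[OF N] w)
  also have "\<dots> = w b" using b EB(1) by simp
  finally show ?thesis .
qed

lemma klin_lift:
  assumes N: "is_mod sa N" and A': "sub_mod N A'" and f: "quotient_map N A A' Q f"
    and L: "klin Q (carr Q) L"
  obtains K where "klin N A' K" "\<And>x. x \<in> ES \<Longrightarrow> f (K x) = L x"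
proof
  define w where "w = (\<lambda>b. SOME n. n \<in> A' \<and> f n = L b)"
  have w: "w b \<in> A' \<and> f (w b) = L b" if "b \<in> EB" for b
  proof -
    have "L b \<in> f ` A'" using klin_in[OF L] EB(2) that quotient_map_image[OF f] by blast
    then have "\<exists>n. n \<in> A' \<and> f n = L b" by (auto simp: image_iff)
    then show ?thesis unfolding w_def by (rule someI_ex)
  qed
  show K: "klin N A' (lext N w)" using lext_klin[OF N A'] w by blast
  have "lext N w b = w b" if "b \<in> EB" for b
    using lext_basis[OF N _ that] w sub_mod_carr[OF A'] by blast
  then show "f (lext N w x) = L x" if "x \<in> ES" for x
    using klin_unique[OF klin_quotient_map[OF K f] L _ that] w by simp
qed

section \<open>The inverse Schur functor\<close>

definition hlin_mod :: "('k, 'h, 'n::ab_group_add) modl \<Rightarrow> 'n set \<Rightarrow> ('s \<Rightarrow> 'n) \<Rightarrow> bool" where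
  "hlin_mod N A L \<longleftrightarrow> (\<forall>a. \<forall>x\<in>ES. L (\<phi> a * x) - act N a (L x) \<in> A)"

abbreviation GG :: "('k, 'h, 'n::ab_group_add) modl \<Rightarrow> ('k, 's, 's \<Rightarrow> 'n) modl" where
  "GG N \<equiv> Gmod sS e \<phi> N"

lemma Gcarr_iff:
  "f \<in> carr (GG N) \<longleftrightarrow> klin N (carr N) f \<and> hlin_mod N {0} f \<and> (\<forall>x. x \<notin> ES \<longrightarrow> f x = 0)"
  unfolding Gmod_def klin_def hlin_mod_def mod_hom_def eS_mod_def ES_def[symmetric] by auto

lemma G_smul: "smul (GG N) c f = (\<lambda>x. if x \<in> ES then smul N c (f x) else 0)"
  and G_act: "act (GG N) s f = (\<lambda>x. if x \<in> ES then f (x * s) else 0)"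
  unfolding Gmod_def ES_def[symmetric] by auto

lemma GcarrD:
  assumes "f \<in> carr (GG N)"
  shows G_apply_carr: "\<And>x. x \<in> ES \<Longrightarrow> f x \<in> carr N"
    and G_apply_add: "\<And>x y. x \<in> ES \<Longrightarrow> y \<in> ES \<Longrightarrow> f (x + y) = f x + f y"
    and G_apply_smul: "\<And>c x. x \<in> ES \<Longrightarrow> f (sS c x) = smul N c (f x)"
    and G_apply_act: "\<And>a x. x \<in> ES \<Longrightarrow> f (\<phi> a * x) = act N a (f x)"
    and G_apply_outside: "\<And>x. x \<notin> ES \<Longrightarrow> f x = 0"
  using assms unfolding Gmod_def mod_hom_def eS_mod_def ES_def[symmetric] by auto

lemma GcarrI:
  assumes "\<And>x. x \<in> ES \<Longrightarrow> f x \<in> carr N"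
    and "\<And>x y. x \<in> ES \<Longrightarrow> y \<in> ES \<Longrightarrow> f (x + y) = f x + f y"
    and "\<And>c x. x \<in> ES \<Longrightarrow> f (sS c x) = smul N c (f x)"
    and "\<And>a x. x \<in> ES \<Longrightarrow> f (\<phi> a * x) = act N a (f x)" and "\<And>x. x \<notin> ES \<Longrightarrow> f x = 0"
  shows "f \<in> carr (GG N)"
  using assms unfolding Gmod_def mod_hom_def eS_mod_def ES_def[symmetric] by auto

lemma G_eval_smul: "smul (GG N) c f e = smul N c (f e)"
  by (simp add: G_smul e_in_ES)

lemma G_eval_act_e: "act (GG N) e f e = f e"
  by (simp add: G_act e_in_ES idem)

lemma G_eval_act_phi: "f \<in> carr (GG N) \<Longrightarrow> act (GG N) (\<phi> a) f e = act N a (f e)"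
  using G_apply_act[OF _ e_in_ES] by (simp add: G_act e_in_ES phi_e)

context
  fixes N :: "('k, 'h, 'n::ab_group_add) modl"
  assumes N: "is_mod sH N"
begin

lemma G_zero: "0 \<in> carr (GG N)"
  by (rule GcarrI) (simp_all add: mod_zero[OF N] smul_zero[OF N] act_zero[OF N])

lemma G_add: "f \<in> carr (GG N) \<Longrightarrow> g \<in> carr (GG N) \<Longrightarrow> f + g \<in> carr (GG N)"
  by (rule GcarrI) (simp_all add: GcarrD mod_add[OF N] smul_add[OF N] act_add[OF N])

lemma G_smul_closed: "f \<in> carr (GG N) \<Longrightarrow> smul (GG N) c f \<in> carr (GG N)"
  by (rule GcarrI)
    (simp_all add: G_smul GcarrD mod_smul[OF N] smul_add[OF N] act_smul[OF N] ES_closed smul_comm[OF N])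

lemma G_act_closed: "f \<in> carr (GG N) \<Longrightarrow> act (GG N) s f \<in> carr (GG N)"
  by (rule GcarrI) (simp_all add: G_act GcarrD ES_closed distrib_right sS_simps(5)[symmetric] mult.assoc)

lemma G_neg: "f \<in> carr (GG N) \<Longrightarrow> - f \<in> carr (GG N)"
proof -
  assume f: "f \<in> carr (GG N)"
  have "smul (GG N) (-1) f = - f" by (rule ext) (auto simp: G_smul GcarrD[OF f] smul_minus_one[OF N])
  then show ?thesis using G_smul_closed[OF f] by metis
qed

lemma G_diff: "f \<in> carr (GG N) \<Longrightarrow> g \<in> carr (GG N) \<Longrightarrow> f - g \<in> carr (GG N)"
  using G_add G_neg by (metis diff_conv_add_uminus)

end

definition in_eSe :: "'s \<Rightarrow> bool" where "in_eSe y \<longleftrightarrow> e * y = y \<and> y * e = y"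

lemma in_eSe_right_e: "x \<in> ES \<Longrightarrow> in_eSe (x * e)"
  unfolding in_eSe_def using ES_iff by (metis idem mult.assoc)

lemma phi_inj: "inj \<phi>"
  using phi_bij bij_betw_def by blast

lemma phi_inv: "in_eSe y \<Longrightarrow> \<phi> (inv \<phi> y) = y"
proof -
  assume "in_eSe y"
  then have "y \<in> range \<phi>"
    using phi_bij unfolding in_eSe_def bij_betw_def by (metis (mono_tags, lifting) CollectI)
  then show ?thesis by (simp add: f_inv_into_f)
qed

lemma inv_phi_add: "in_eSe y1 \<Longrightarrow> in_eSe y2 \<Longrightarrow> inv \<phi> (y1 + y2) = inv \<phi> y1 + inv \<phi> y2"
proof -
  assume "in_eSe y1" "in_eSe y2"
  moreover have "in_eSe (y1 + y2)"
    using calculation unfolding in_eSe_def by (simp add: distrib_left distrib_right)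
  ultimately show ?thesis by (intro injD[OF phi_inj]) (simp add: phi_inv phi_add)
qed

lemma inv_phi_smul: "in_eSe y \<Longrightarrow> inv \<phi> (sS c y) = sH c (inv \<phi> y)"
proof -
  assume y: "in_eSe y"
  have "in_eSe (sS c y)" using y unfolding in_eSe_def by (metis sS_simps(5,6))
  then show ?thesis using y by (intro injD[OF phi_inj]) (simp add: phi_inv phi_smul)
qed

lemma inv_phi_mult: "in_eSe y \<Longrightarrow> inv \<phi> (\<phi> a * y) = a * inv \<phi> y"
proof -
  assume y: "in_eSe y"
  have "in_eSe (\<phi> a * y)" using y phi_e unfolding in_eSe_def by (metis mult.assoc)
  then show ?thesis using y by (intro injD[OF phi_inj]) (simp add: phi_inv phi_mult)
qed

lemma inv_phi_e: "inv \<phi> e = 1"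
  using inv_f_f[OF phi_inj, of 1] phi_one by simp

lemma G_apply_right_e:
  assumes u: "u \<in> carr (GG N)" and x: "x \<in> ES"
  shows "u (x * e) = act N (inv \<phi> (x * e)) (u e)"
  using G_apply_act[OF u e_in_ES, of "inv \<phi> (x * e)"] phi_inv[OF in_eSe_right_e[OF x]]
  by (simp add: mult.assoc idem)

(* The inverse of evaluation at e. *)
definition G_elem :: "('k, 'h, 'n::ab_group_add) modl \<Rightarrow> 'n \<Rightarrow> 's \<Rightarrow> 'n" where
  "G_elem N n = (\<lambda>x. if x \<in> ES then act N (inv \<phi> (x * e)) n else 0)"

lemma G_elem_e: "is_mod sH N \<Longrightarrow> n \<in> carr N \<Longrightarrow> G_elem N n e = n"
  unfolding G_elem_def using e_in_ES by (simp add: idem inv_phi_e act_one)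

lemma G_elem_carr:
  assumes N: "is_mod sH N" and n: "n \<in> carr N"
  shows "G_elem N n \<in> carr (GG N)"
proof (rule GcarrI)
  fix x assume x: "x \<in> ES"
  show "G_elem N n x \<in> carr N" unfolding G_elem_def using x mod_act[OF N n] by simp
  show "G_elem N n (sS c x) = smul N c (G_elem N n x)" for c
    unfolding G_elem_def using x ES_smul[OF x]
    by (simp add: sS_simps(5)[symmetric] inv_phi_smul in_eSe_right_e act_sa[OF N n])
  show "G_elem N n (\<phi> a * x) = act N a (G_elem N n x)" for a
    unfolding G_elem_def using x ES_phi_mult[OF x]
    by (simp add: mult.assoc inv_phi_mult in_eSe_right_e act_mult[OF N n])
  show "G_elem N n (x + y) = G_elem N n x + G_elem N n y" if y: "y \<in> ES" for y
    unfolding G_elem_def using x y ES_add[OF x y]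
    by (simp add: distrib_right inv_phi_add in_eSe_right_e act_adds[OF N n])
qed (simp add: G_elem_def)

lemma G_elem_eval: "f \<in> carr (GG N) \<Longrightarrow> G_elem N (f e) = act (GG N) e f"
  by (rule ext) (simp add: G_elem_def G_act G_apply_right_e)

lemma G_act_e_eq_zero:
  assumes "is_mod sH N" "u \<in> carr (GG N)" "u e = 0"
  shows "act (GG N) e u = 0"
proof -
  have "act (GG N) e u = G_elem N 0" using G_elem_eval[of u N] assms by simp
  then show ?thesis by (simp add: G_elem_def act_zero[OF assms(1)] fun_eq_iff)
qed

section \<open>Evaluating filtrations of \<open>G N\<close> at \<open>e\<close>\<close>

lemma sub_mod_eval_e:
  assumes N: "is_mod sH N" and A: "sub_mod (GG N) A"
  shows "sub_mod N ((\<lambda>f. f e) ` A)"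
  unfolding sub_mod_def
proof (intro conjI ballI allI)
  have AG: "f \<in> A \<Longrightarrow> f \<in> carr (GG N)" for f using sub_mod_carr[OF A] by blast
  show "(\<lambda>f. f e) ` A \<subseteq> carr N" using G_apply_carr[OF AG e_in_ES] by blast
  show "0 \<in> (\<lambda>f. f e) ` A" using image_eqI[of 0 "\<lambda>f. f e" 0 A] sub_mod_zero[OF A] by simp
  fix x assume "x \<in> (\<lambda>f. f e) ` A"
  then obtain f where x: "x = f e" and f: "f \<in> A" by blast
  show "smul N c x \<in> (\<lambda>f. f e) ` A" for c
    using sub_mod_smul[OF A f] G_eval_smul[of N c f] x by (metis image_eqI)
  show "act N a x \<in> (\<lambda>f. f e) ` A" for a
    using sub_mod_act[OF A f] G_eval_act_phi[OF AG[OF f]] x by (metis image_eqI)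
  fix y assume "y \<in> (\<lambda>f. f e) ` A"
  then obtain g where y: "y = g e" and g: "g \<in> A" by blast
  show "x + y \<in> (\<lambda>f. f e) ` A" using image_eqI[of _ "\<lambda>f. f e" "f + g"] sub_mod_add[OF A f g] x y by simp
qed

lemma quotient_map_eval_e:
  assumes N: "is_mod sH N" and D: "is_mod sH D" and A': "sub_mod (GG N) A'"
    and \<psi>: "quotient_map (GG N) A A' (GG D) \<psi>"
  shows "quotient_map N ((\<lambda>f. f e) ` A) ((\<lambda>f. f e) ` A') D (\<lambda>n. \<psi> (G_elem N n) e)"
proof -
  let ?\<rho> = "\<lambda>n. \<psi> (G_elem N n) e"
  have A'G: "f \<in> A' \<Longrightarrow> f \<in> carr (GG N)" for f using sub_mod_carr[OF A'] by blast
  have \<rho>: "?\<rho> (f e) = \<psi> f e" if f: "f \<in> A'" for f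
    using G_elem_eval[OF A'G[OF f]] quotient_map_act[OF \<psi> f, of e] by (simp add: G_eval_act_e)
  have \<psi>G: "f \<in> A' \<Longrightarrow> \<psi> f \<in> carr (GG D)" for f using quotient_map_carr[OF \<psi>] .
  show ?thesis
  proof (rule quotient_mapI)
    fix n assume "n \<in> (\<lambda>f. f e) ` A'"
    then obtain f where f: "f \<in> A'" and n: "n = f e" by blast
    show "?\<rho> n \<in> carr D" using n \<rho>[OF f] G_apply_carr[OF \<psi>G[OF f] e_in_ES] by simp
    show "?\<rho> (smul N c n) = smul D c (?\<rho> n)" for c
      using \<rho>[OF f] \<rho>[OF sub_mod_smul[OF A' f]] quotient_map_smul[OF \<psi> f] n by (simp add: G_eval_smul)
    show "?\<rho> (act N a n) = act D a (?\<rho> n)" for a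
      using \<rho>[OF f] \<rho>[OF sub_mod_act[OF A' f, of "\<phi> a"]] quotient_map_act[OF \<psi> f, of "\<phi> a"] n
      by (simp add: G_eval_act_phi A'G[OF f] \<psi>G[OF f])
    show "?\<rho> n = 0 \<longleftrightarrow> n \<in> (\<lambda>f. f e) ` A"
    proof
      assume "?\<rho> n = 0"
      then have "\<psi> (act (GG N) e f) = 0"
        using n \<rho>[OF f] quotient_map_act[OF \<psi> f] G_act_e_eq_zero[OF D \<psi>G[OF f]] by simp
      then have "act (GG N) e f \<in> A"
        using quotient_map_kernel[OF \<psi> sub_mod_act[OF A' f]] by blast
      then show "n \<in> (\<lambda>f. f e) ` A" using n G_eval_act_e[of N f] by (metis image_eqI)
    next
      assume "n \<in> (\<lambda>f. f e) ` A"
      then obtain g where g: "g \<in> A" and "n = g e" by blast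
      moreover have "g \<in> A'" using g quotient_map_subset[OF \<psi>] by blast
      moreover have "\<psi> g = 0" using quotient_map_kernel[OF \<psi> \<open>g \<in> A'\<close>] g by simp
      ultimately show "?\<rho> n = 0" using \<rho> by simp
    qed
    fix m assume "m \<in> (\<lambda>f. f e) ` A'"
    then obtain g where g: "g \<in> A'" and m: "m = g e" by blast
    show "?\<rho> (n + m) = ?\<rho> n + ?\<rho> m"
      using \<rho>[OF f] \<rho>[OF g] \<rho>[OF sub_mod_add[OF A' f g]] quotient_map_add[OF \<psi> f g] n m by simp
  next
    show "(\<lambda>f. f e) ` A \<subseteq> (\<lambda>f. f e) ` A'" using quotient_map_subset[OF \<psi>] by blast
    show "carr D \<subseteq> ?\<rho> ` (\<lambda>f. f e) ` A'"
    proof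
      fix d assume d: "d \<in> carr D"
      obtain f where f: "f \<in> A'" and "\<psi> f = G_elem D d"
        using G_elem_carr[OF D d] quotient_map_image[OF \<psi>] by (metis imageE)
      then have "?\<rho> (f e) = d" using \<rho>[OF f] G_elem_e[OF D d] by simp
      then show "d \<in> ?\<rho> ` (\<lambda>f. f e) ` A'" using f by blast
    qed
  qed
qed

lemma filtration_eval_e:
  assumes N: "is_mod sH N" and D: "\<forall>\<mu>\<in>I. is_mod sH (D \<mu>)"
    and F: "filtration (GG N) (\<lambda>\<mu>. GG (D \<mu>)) I t Gc \<mu>"
  shows "filtration N D I t (\<lambda>i. (\<lambda>f. f e) ` Gc i) \<mu>"
  unfolding filtration_def
proof (intro conjI allI impI)
  show "(\<lambda>f. f e) ` Gc 0 = {0}" using filtration_bot[OF F] by simp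
  show "(\<lambda>f. f e) ` Gc t = carr N"
  proof (intro equalityI subsetI)
    fix n assume "n \<in> carr N"
    then show "n \<in> (\<lambda>f. f e) ` Gc t"
      using filtration_top[OF F] G_elem_carr[OF N] G_elem_e[OF N] by (metis image_eqI)
  qed (use filtration_top[OF F] G_apply_carr[OF _ e_in_ES] in auto)
  show "sub_mod N ((\<lambda>f. f e) ` Gc i)" if "i \<le> t" for i
    using sub_mod_eval_e[OF N filtration_sub_mod[OF F that]] .
  fix i assume i: "i < t"
  obtain \<psi> where \<psi>: "quotient_map (GG N) (Gc i) (Gc (Suc i)) (GG (D (\<mu> i))) \<psi>"
    using filtration_step[OF F i] by blast
  show "(\<lambda>f. f e) ` Gc i \<subseteq> (\<lambda>f. f e) ` Gc (Suc i)" using quotient_map_subset[OF \<psi>] by blast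
  show "\<mu> i \<in> I" using filtration_index[OF F i] .
  show "\<exists>\<rho>. quotient_map N ((\<lambda>f. f e) ` Gc i) ((\<lambda>f. f e) ` Gc (Suc i)) (D (\<mu> i)) \<rho>"
    using quotient_map_eval_e[OF N _ filtration_sub_mod[OF F] \<psi>] D filtration_index[OF F i] i by auto
qed

section \<open>The unit \<open>M \<rightarrow> G (F M)\<close>\<close>

abbreviation FF :: "('k, 's, 'm::ab_group_add) modl \<Rightarrow> ('k, 'h, 'm) modl" where
  "FF M \<equiv> Fmod e \<phi> M"

lemma F_simps: "carr (FF M) = act M e ` carr M" "smul (FF M) = smul M" "act (FF M) a = act M (\<phi> a)"
  unfolding Fmod_def by simp_all

lemma F_act_e: "is_mod sS M \<Longrightarrow> x \<in> carr (FF M) \<Longrightarrow> act M e x = x"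
  unfolding F_simps by (auto simp: act_mult[symmetric] idem)

lemma F_carr_subset: "is_mod sS M \<Longrightarrow> carr (FF M) \<subseteq> carr M"
  unfolding F_simps using mod_act by blast

lemma F_is_mod:
  assumes M: "is_mod sS M"
  shows "is_mod sH (FF M)"
proof -
  have sub: "carr (FF M) \<subseteq> carr M" by (rule F_carr_subset[OF M])
  have closed: "act M e x \<in> carr (FF M)" if "x \<in> carr M" for x
    unfolding F_simps using that by blast
  have fd: "fin_dim_on (smul M) (carr (FF M))"
    unfolding F_simps
    by (rule fin_dim_on_image[OF is_mod_kspace_on[OF M] is_mod_kspace_on[OF M] mod_fin_dim[OF M]])
       (simp_all add: mod_act[OF M] act_add[OF M] act_smul[OF M])
  have "0 \<in> carr (FF M)" using closed[OF mod_zero[OF M]] act_zero[OF M] by simp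
  moreover have "x + y \<in> carr (FF M)" "- x \<in> carr (FF M)" "smul M c x \<in> carr (FF M)"
    "act M (\<phi> a) x \<in> carr (FF M)" if "x \<in> carr (FF M)" "y \<in> carr (FF M)" for x y c a
  proof -
    have x: "x \<in> carr M" "act M e x = x" and y: "y \<in> carr M" "act M e y = y"
      using that sub F_act_e[OF M] by auto
    show "x + y \<in> carr (FF M)" using closed[OF mod_add[OF M x(1) y(1)]] act_add[OF M x(1) y(1)] x y by simp
    show "- x \<in> carr (FF M)" using closed[OF mod_neg[OF M x(1)]] act_uminus[OF M x(1)] x by simp
    show "smul M c x \<in> carr (FF M)" using closed[OF mod_smul[OF M x(1)]] act_smul[OF M x(1)] x by simp
    have "act M (\<phi> a) x = act M e (act M (\<phi> a) x)"
      using act_mult[OF M x(1), of e "\<phi> a"] by (simp add: phi_e)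
    then show "act M (\<phi> a) x \<in> carr (FF M)" using closed[OF mod_act[OF M x(1)]] by metis
  qed
  ultimately show ?thesis
    unfolding is_mod_def using fd sub F_act_e[OF M]
    by (simp add: F_simps(2,3) phi_add phi_mult phi_one phi_smul subset_iff smul_add[OF M] smul_adds[OF M]
        smul_mult[OF M] smul_one[OF M] act_add[OF M] act_adds[OF M] act_mult[OF M] act_sa[OF M]
        act_smul[OF M])
qed

definition GF_unit :: "('k, 's, 'm::ab_group_add) modl \<Rightarrow> 'm \<Rightarrow> 's \<Rightarrow> 'm" where
  "GF_unit M m = (\<lambda>x. if x \<in> ES then act M x m else 0)"

lemma GF_unit_hom:
  assumes M: "is_mod sS M"
  shows "mod_hom M (GG (FF M)) (GF_unit M)"
  unfolding mod_hom_def
proof (intro conjI ballI allI)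
  fix m assume m: "m \<in> carr M"
  show "GF_unit M m \<in> carr (GG (FF M))"
  proof (rule GcarrI)
    fix x assume x: "x \<in> ES"
    have "act M x m = act M e (act M x m)" using act_mult[OF M m, of e x] x ES_iff by simp
    then show "GF_unit M m x \<in> carr (FF M)" unfolding GF_unit_def F_simps using x mod_act[OF M m] by auto
    show "GF_unit M m (sS c x) = smul (FF M) c (GF_unit M m x)" for c
      unfolding GF_unit_def F_simps using x ES_smul[OF x] act_sa[OF M m] by simp
    show "GF_unit M m (\<phi> a * x) = act (FF M) a (GF_unit M m x)" for a
      unfolding GF_unit_def F_simps using x ES_phi_mult[OF x] act_mult[OF M m] by simp
    show "GF_unit M m (x + y) = GF_unit M m x + GF_unit M m y" if "y \<in> ES" for y
      unfolding GF_unit_def using x that ES_add[OF x that] act_adds[OF M m] by simp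
  qed (simp add: GF_unit_def)
  show "GF_unit M (smul M c m) = smul (GG (FF M)) c (GF_unit M m)" for c
    by (rule ext) (simp add: GF_unit_def act_smul[OF M m] G_smul F_simps)
  show "GF_unit M (act M s m) = act (GG (FF M)) s (GF_unit M m)" for s
    by (rule ext) (simp add: GF_unit_def act_mult[OF M m] G_act ES_mult_right)
  fix n assume n: "n \<in> carr M"
  show "GF_unit M (m + n) = GF_unit M m + GF_unit M n"
    by (rule ext) (simp add: GF_unit_def act_add[OF M m n])
qed

lemma GF_unit_carr: "is_mod sS M \<Longrightarrow> m \<in> carr M \<Longrightarrow> GF_unit M m \<in> carr (GG (FF M))"
  using GF_unit_hom unfolding mod_hom_def by blast

lemma GF_unit_diff:
  "is_mod sS M \<Longrightarrow> m \<in> carr M \<Longrightarrow> n \<in> carr M \<Longrightarrow> GF_unit M (m - n) = GF_unit M m - GF_unit M n"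
  by (rule ext) (simp add: GF_unit_def act_diff)

lemma GF_unit_kernel_step:
  assumes M: "is_mod sS M" and A': "sub_mod M A'" and \<psi>: "quotient_map M A A' (GG D) \<psi>"
    and m: "m \<in> A'" and m0: "GF_unit M m = 0"
  shows "m \<in> A"
proof -
  have "\<psi> m x = 0" for x
  proof (cases "x \<in> ES")
    case True
    have "act M x m = 0" using fun_cong[OF m0, of x] True by (simp add: GF_unit_def)
    then have "act (GG D) x (\<psi> m) e = 0"
      using quotient_map_act[OF \<psi> m, of x] quotient_map_zero[OF \<psi> A'] by simp
    then show ?thesis using True by (simp add: G_act e_in_ES idem ES_iff)
  next
    case False
    then show ?thesis using G_apply_outside[OF quotient_map_carr[OF \<psi> m]] by simp
  qed
  then have "\<psi> m = 0" by (simp add: fun_eq_iff)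
  then show ?thesis using quotient_map_kernel[OF \<psi> m] by simp
qed

lemma GF_unit_inj_on:
  assumes M: "is_mod sS M" and F: "filtration M (\<lambda>\<mu>. GG (D \<mu>)) I t Mc \<mu>"
  shows "inj_on (GF_unit M) (carr M)"
proof -
  have "\<forall>m\<in>Mc j. GF_unit M m = 0 \<longrightarrow> m = 0" if "j \<le> t" for j
    using that
  proof (induction j)
    case 0
    then show ?case using filtration_bot[OF F] by simp
  next
    case (Suc j)
    obtain \<psi> where \<psi>: "quotient_map M (Mc j) (Mc (Suc j)) (GG (D (\<mu> j))) \<psi>"
      using filtration_step[OF F, of j] Suc.prems by (auto simp: Suc_le_eq)
    show ?case
    proof (intro ballI impI)
      fix m assume m: "m \<in> Mc (Suc j)" and m0: "GF_unit M m = 0"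
      have "m \<in> Mc j" by (rule GF_unit_kernel_step[OF M filtration_sub_mod[OF F Suc.prems] \<psi> m m0])
      then show "m = 0" using Suc.IH[OF Suc_leD[OF Suc.prems]] m0 by blast
    qed
  qed
  note kernel = this
  show ?thesis
  proof (rule inj_onI)
    fix m n assume m: "m \<in> carr M" and n: "n \<in> carr M" and eq: "GF_unit M m = GF_unit M n"
    have "GF_unit M (m - n) = 0" using GF_unit_diff[OF M m n] eq by simp
    then have "m - n = 0" using kernel[OF order_refl] filtration_top[OF F] mod_diff[OF M m n] by blast
    then show "m = n" by simp
  qed
qed

lemma GF_unit_lift_step:
  assumes M: "is_mod sS M" and D: "is_mod sH D" and A': "sub_mod M A'"
    and \<psi>: "quotient_map M A A' (GG D) \<psi>"
    and f: "f \<in> carr (GG (FF M))" and fA': "\<forall>x\<in>ES. f x \<in> A'"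
  obtains m where "m \<in> A'" "\<forall>x\<in>ES. f x - act M x m \<in> A"
proof -
  define u where "u = (\<lambda>x. if x \<in> ES then \<psi> (f x) e else 0)"
  have \<psi>G: "\<psi> n \<in> carr (GG D)" if "n \<in> A'" for n using quotient_map_carr[OF \<psi> that] .
  have "u \<in> carr (GG D)"
  proof (rule GcarrI)
    fix x assume x: "x \<in> ES"
    show "u x \<in> carr D" unfolding u_def using x G_apply_carr[OF \<psi>G e_in_ES] fA' by simp
    show "u (sS c x) = smul D c (u x)" for c
      unfolding u_def using x ES_smul[OF x] G_apply_smul[OF f x] quotient_map_smul[OF \<psi>] fA'
      by (simp add: F_simps G_eval_smul)
    show "u (\<phi> a * x) = act D a (u x)" for a
      unfolding u_def using x ES_phi_mult[OF x] G_apply_act[OF f x] quotient_map_act[OF \<psi>] fA'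
      by (simp add: F_simps G_eval_act_phi \<psi>G)
    show "u (x + y) = u x + u y" if y: "y \<in> ES" for y
      unfolding u_def using x y ES_add[OF x y] G_apply_add[OF f x y] quotient_map_add[OF \<psi>] fA'
      by simp
  qed (simp add: u_def)
  then have "u \<in> \<psi> ` A'" using quotient_map_image[OF \<psi>] by simp
  then obtain m where u: "u = \<psi> m" and m: "m \<in> A'" by (rule imageE)
  have "f x - act M x m \<in> A" if x: "x \<in> ES" for x
  proof -
    let ?d = "f x - act M x m"
    have fxF: "f x \<in> carr (FF M)" by (rule G_apply_carr[OF f x])
    then have fx: "f x \<in> carr M" "act M e (f x) = f x"
      using F_carr_subset[OF M] F_act_e[OF M] by auto
    have mM: "m \<in> carr M" using m sub_mod_carr[OF A'] by auto
    have d: "?d \<in> A'" by (rule sub_mod_diff[OF M A']) (use fA' x sub_mod_act[OF A' m] in auto)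
    have "act M e (act M x m) = act M x m"
      using act_mult[OF M mM, of e x] x ES_iff by metis
    then have "act M e ?d = ?d" using fx act_diff[OF M fx(1) mod_act[OF M mM]] by simp
    have "\<psi> (act M x m) e = \<psi> m (e * x)"
      using quotient_map_act[OF \<psi> m, of x] by (simp add: G_act e_in_ES)
    also have "\<dots> = u x" using u x by (simp add: ES_iff)
    also have "\<dots> = \<psi> (f x) e" using x by (simp add: u_def)
    finally have "\<psi> ?d e = 0"
      using quotient_map_diff[OF M A' \<psi> _ sub_mod_act[OF A' m], of "f x" x] fA' x by simp
    have "\<psi> ?d = \<psi> (act M e ?d)" using \<open>act M e ?d = ?d\<close> by simp
    also have "\<dots> = act (GG D) e (\<psi> ?d)" by (rule quotient_map_act[OF \<psi> d])
    also have "\<dots> = 0" by (rule G_act_e_eq_zero[OF D \<psi>G[OF d] \<open>\<psi> ?d e = 0\<close>])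
    finally show ?thesis using quotient_map_kernel[OF \<psi> d] by simp
  qed
  then show ?thesis using that m by blast
qed

lemma GF_unit_surj:
  assumes M: "is_mod sS M" and D: "\<forall>\<mu>\<in>I. is_mod sH (D \<mu>)"
    and F: "filtration M (\<lambda>\<mu>. GG (D \<mu>)) I t Mc \<mu>"
  shows "carr (GG (FF M)) \<subseteq> GF_unit M ` carr M"
proof -
  have FM: "is_mod sH (FF M)" by (rule F_is_mod[OF M])
  have "\<forall>f\<in>carr (GG (FF M)). (\<forall>x\<in>ES. f x \<in> Mc j) \<longrightarrow> (\<exists>m\<in>Mc j. \<forall>x\<in>ES. act M x m = f x)"
    if "j \<le> t" for j
    using that
  proof (induction j)
    case 0
    show ?case
    proof (intro ballI impI)
      fix f assume "\<forall>x\<in>ES. f x \<in> Mc 0"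
      then show "\<exists>m\<in>Mc 0. \<forall>x\<in>ES. act M x m = f x"
        using filtration_bot[OF F] act_zero[OF M] by (intro bexI[of _ 0]) auto
    qed
  next
    case (Suc j)
    have j: "j < t" using Suc.prems by simp
    have S: "sub_mod M (Mc (Suc j))" and Sj: "sub_mod M (Mc j)"
      using filtration_sub_mod[OF F] Suc.prems j by simp_all
    obtain \<psi> where \<psi>: "quotient_map M (Mc j) (Mc (Suc j)) (GG (D (\<mu> j))) \<psi>"
      using filtration_step[OF F j] by blast
    have Dj: "is_mod sH (D (\<mu> j))" using D filtration_index[OF F j] by blast
    show ?case
    proof (intro ballI impI)
      fix f assume f: "f \<in> carr (GG (FF M))" and fS: "\<forall>x\<in>ES. f x \<in> Mc (Suc j)"
      obtain m1 where m1: "m1 \<in> Mc (Suc j)" and fm1: "\<forall>x\<in>ES. f x - act M x m1 \<in> Mc j"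
        using GF_unit_lift_step[OF M Dj S \<psi> f fS] by blast
      have m1M: "m1 \<in> carr M" using m1 sub_mod_carr[OF S] by auto
      have "f - GF_unit M m1 \<in> carr (GG (FF M))" by (rule G_diff[OF FM f GF_unit_carr[OF M m1M]])
      moreover have "\<forall>x\<in>ES. (f - GF_unit M m1) x \<in> Mc j" using fm1 by (simp add: GF_unit_def)
      ultimately obtain m0 where m0: "m0 \<in> Mc j" and fm0: "\<forall>x\<in>ES. act M x m0 = (f - GF_unit M m1) x"
        using Suc.IH[OF Suc_leD[OF Suc.prems], rule_format] by blast
      have "m0 + m1 \<in> Mc (Suc j)"
        by (rule sub_mod_add[OF S _ m1]) (use m0 quotient_map_subset[OF \<psi>] in auto)
      moreover have "act M x (m0 + m1) = f x" if "x \<in> ES" for x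
      proof -
        have "m0 \<in> carr M" using m0 sub_mod_carr[OF Sj] by auto
        then show ?thesis using act_add[OF M _ m1M, of m0 x] fm0 that by (simp add: GF_unit_def)
      qed
      ultimately show "\<exists>m\<in>Mc (Suc j). \<forall>x\<in>ES. act M x m = f x" by blast
    qed
  qed
  note lift = this[OF order_refl, rule_format]
  show ?thesis
  proof
    fix f assume f: "f \<in> carr (GG (FF M))"
    have "\<forall>x\<in>ES. f x \<in> Mc t"
      using G_apply_carr[OF f] F_carr_subset[OF M] filtration_top[OF F] by auto
    then obtain m where m: "m \<in> Mc t" and fm: "\<forall>x\<in>ES. act M x m = f x" using lift[OF f] by blast
    have "GF_unit M m = f" using fm G_apply_outside[OF f] by (auto simp: GF_unit_def fun_eq_iff)
    then show "f \<in> GF_unit M ` carr M" using m filtration_top[OF F] by blast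
  qed
qed

lemma GF_iso:
  assumes M: "is_mod sS M" and D: "\<forall>\<mu>\<in>I. is_mod sH (D \<mu>)"
    and F: "filtration M (\<lambda>\<mu>. GG (D \<mu>)) I t Mc \<mu>"
  shows "mod_iso (GG (FF M)) M"
proof -
  have "GF_unit M ` carr M \<subseteq> carr (GG (FF M))" using GF_unit_carr[OF M] by blast
  then have "GF_unit M ` carr M = carr (GG (FF M))" using GF_unit_surj[OF M D F] by (rule equalityI)
  then have bij: "bij_betw (GF_unit M) (carr M) (carr (GG (FF M)))"
    using GF_unit_inj_on[OF M F] unfolding bij_betw_def by blast
  have "mod_hom (GG (FF M)) M (the_inv_into (carr M) (GF_unit M))"
    by (rule mod_hom_the_inv_into[OF GF_unit_hom[OF M] bij])
      (simp_all add: mod_add[OF M] mod_smul[OF M] mod_act[OF M])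
  then show ?thesis unfolding mod_iso_def using bij_betw_the_inv_into[OF bij] by blast
qed

section \<open>Vanishing of \<open>Ext\<^sup>1(eS, -)\<close> along a filtration\<close>

definition cocycle_ext :: "('k, 'h, 'd::ab_group_add) modl \<Rightarrow> ('h \<Rightarrow> 's \<Rightarrow> 'd) \<Rightarrow> ('k, 'h, 'd \<times> 's) modl"
  where "cocycle_ext D C = \<lparr>carr = carr D \<times> ES, smul = (\<lambda>c p. (smul D c (fst p), sS c (snd p))),
      act = (\<lambda>h p. (act D h (fst p) + C h (snd p), \<phi> h * snd p))\<rparr>"

lemma cocycle_ext_simps:
  "carr (cocycle_ext D C) = carr D \<times> ES"
  "smul (cocycle_ext D C) c (d, y) = (smul D c d, sS c y)"
  "act (cocycle_ext D C) h (d, y) = (act D h d + C h y, \<phi> h * y)"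
  unfolding cocycle_ext_def by simp_all

lemma EB_nonzero: "0 \<notin> EB"
  using EB(3) VS.dependent_zero by blast

lemma fin_dim_cocycle_ext:
  fixes D :: "('k, 'h, 'd::ab_group_add) modl"
  assumes D: "is_mod sH D"
  shows "fin_dim_on (smul (cocycle_ext D C)) (carr D \<times> ES)"
proof -
  obtain BD where BD: "finite BD" "BD \<subseteq> carr D" "\<forall>v\<in>carr D. \<exists>c. v = (\<Sum>b\<in>BD. smul D (c b) b)"
    using mod_fin_dim[OF D] unfolding fin_dim_on_def by blast
  define B1 where "B1 = (\<lambda>d. (d, 0::'s)) ` BD"
  define B2 where "B2 = (\<lambda>b. (0::'d, b)) ` EB"
  have disj: "B1 \<inter> B2 = {}" unfolding B1_def B2_def using EB_nonzero by auto
  have fin: "finite B1" "finite B2" unfolding B1_def B2_def using BD EB(1) by auto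
  let ?sm = "smul (cocycle_ext D C)"
  show ?thesis unfolding fin_dim_on_def
  proof (rule exI[of _ "B1 \<union> B2"], intro conjI ballI)
    show "finite (B1 \<union> B2)" using fin by simp
    show "B1 \<union> B2 \<subseteq> carr D \<times> ES"
      unfolding B1_def B2_def using BD(2) EB(2) mod_zero[OF D] ES_zero by auto
    fix p assume "p \<in> carr D \<times> ES"
    then obtain d y where p: "p = (d, y)" and d: "d \<in> carr D" and y: "y \<in> ES" by auto
    obtain c1 where c1: "d = (\<Sum>b\<in>BD. smul D (c1 b) b)" using BD(3) d by blast
    define c where "c = (\<lambda>q. if q \<in> B1 then c1 (fst q) else rep y (snd q))"
    have "(\<Sum>q\<in>B1. ?sm (c q) q) = (\<Sum>b\<in>BD. ?sm (c (b, 0)) (b, 0))"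
      unfolding B1_def by (rule sum.reindex[unfolded comp_def]) (auto simp: inj_on_def)
    also have "\<dots> = (\<Sum>b\<in>BD. (smul D (c1 b) b, 0))"
      by (intro sum.cong refl) (auto simp: cocycle_ext_def c_def B1_def)
    also have "\<dots> = (d, 0)" unfolding sum_prod c1 by simp
    finally have s1: "(\<Sum>q\<in>B1. ?sm (c q) q) = (d, 0)" .
    have "(\<Sum>q\<in>B2. ?sm (c q) q) = (\<Sum>b\<in>EB. ?sm (c (0, b)) (0, b))"
      unfolding B2_def by (rule sum.reindex[unfolded comp_def]) (auto simp: inj_on_def)
    also have "\<dots> = (\<Sum>b\<in>EB. (0, sS (rep y b) b))"
    proof (intro sum.cong refl)
      fix b assume "b \<in> EB"
      then have "(0, b) \<notin> B1" using disj unfolding B2_def by blast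
      then show "?sm (c (0, b)) (0, b) = (0, sS (rep y b) b)"
        unfolding cocycle_ext_def c_def by (simp add: smul_zero[OF D])
    qed
    also have "\<dots> = (0, y)" unfolding sum_prod using ES_expand[OF y] by simp
    finally have s2: "(\<Sum>q\<in>B2. ?sm (c q) q) = (0, y)" .
    have "p = (\<Sum>q\<in>B1. ?sm (c q) q) + (\<Sum>q\<in>B2. ?sm (c q) q)" unfolding s1 s2 p by simp
    also have "\<dots> = (\<Sum>q\<in>B1 \<union> B2. ?sm (c q) q)"
      by (rule sum.union_disjoint[symmetric]) (use fin disj in auto)
    finally show "\<exists>c. p = (\<Sum>b\<in>B1 \<union> B2. ?sm (c b) b)" by blast
  qed
qed

lemma is_mod_cocycle_ext:
  assumes D: "is_mod sH D"
    and C_carr: "\<And>h y. y \<in> ES \<Longrightarrow> C h y \<in> carr D"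
    and C_add: "\<And>h y1 y2. y1 \<in> ES \<Longrightarrow> y2 \<in> ES \<Longrightarrow> C h (y1 + y2) = C h y1 + C h y2"
    and C_adds: "\<And>a b y. y \<in> ES \<Longrightarrow> C (a + b) y = C a y + C b y"
    and C_mult: "\<And>a b y. y \<in> ES \<Longrightarrow> C (a * b) y = act D a (C b y) + C a (\<phi> b * y)"
    and C_one: "\<And>y. y \<in> ES \<Longrightarrow> C 1 y = 0"
    and C_sH: "\<And>c a y. y \<in> ES \<Longrightarrow> C (sH c a) y = smul D c (C a y)"
    and C_sS: "\<And>c a y. y \<in> ES \<Longrightarrow> C a (sS c y) = smul D c (C a y)"
  shows "is_mod sH (cocycle_ext D C)"
  unfolding is_mod_def
proof (intro conjI ballI allI)
  show "fin_dim_on (smul (cocycle_ext D C)) (carr (cocycle_ext D C))"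
    unfolding cocycle_ext_simps(1) by (rule fin_dim_cocycle_ext[OF D])
  show "0 \<in> carr (cocycle_ext D C)"
    unfolding cocycle_ext_simps zero_prod_def using mod_zero[OF D] ES_zero by simp
  fix p assume "p \<in> carr (cocycle_ext D C)"
  then obtain d y where p: "p = (d, y)" and d: "d \<in> carr D" and y: "y \<in> ES"
    unfolding cocycle_ext_simps by auto
  note simps = p cocycle_ext_simps
  show "- p \<in> carr (cocycle_ext D C)" unfolding simps using mod_neg[OF D d] ES_uminus[OF y] by simp
  show "smul (cocycle_ext D C) c p \<in> carr (cocycle_ext D C)" for c
    unfolding simps using mod_smul[OF D d] ES_smul[OF y] by simp
  show "act (cocycle_ext D C) a p \<in> carr (cocycle_ext D C)" for a
    unfolding simps using mod_act[OF D d] C_carr[OF y] mod_add[OF D] ES_phi_mult[OF y] by simp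
  show "smul (cocycle_ext D C) (c + c') p = smul (cocycle_ext D C) c p + smul (cocycle_ext D C) c' p"
    for c c' unfolding simps using smul_adds[OF D d] sS_simps(2) by simp
  show "smul (cocycle_ext D C) (c * c') p = smul (cocycle_ext D C) c (smul (cocycle_ext D C) c' p)"
    for c c' unfolding simps using smul_mult[OF D d] sS_simps(3) by simp
  show "smul (cocycle_ext D C) 1 p = p" unfolding simps using smul_one[OF D d] sS_simps(4) by simp
  show "act (cocycle_ext D C) (a + b) p = act (cocycle_ext D C) a p + act (cocycle_ext D C) b p" for a b
    unfolding simps using act_adds[OF D d] C_adds[OF y] by (simp add: phi_add distrib_right algebra_simps)
  show "act (cocycle_ext D C) (a * b) p = act (cocycle_ext D C) a (act (cocycle_ext D C) b p)" for a b
    unfolding simps using act_mult[OF D d] C_mult[OF y] act_add[OF D mod_act[OF D d] C_carr[OF y]]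
    by (simp add: phi_mult mult.assoc algebra_simps)
  show "act (cocycle_ext D C) 1 p = p"
    unfolding simps using act_one[OF D d] C_one[OF y] y ES_iff by (simp add: phi_one)
  show "act (cocycle_ext D C) (sH c a) p = smul (cocycle_ext D C) c (act (cocycle_ext D C) a p)" for c a
    unfolding simps using act_sa[OF D d] C_sH[OF y] smul_add[OF D mod_act[OF D d] C_carr[OF y]]
    by (simp add: phi_smul sS_simps(5))
  show "act (cocycle_ext D C) a (smul (cocycle_ext D C) c p) = smul (cocycle_ext D C) c (act (cocycle_ext D C) a p)"
    for c a unfolding simps using act_smul[OF D d] C_sS[OF y] smul_add[OF D mod_act[OF D d] C_carr[OF y]]
    by (simp add: sS_simps(6))
  fix q assume "q \<in> carr (cocycle_ext D C)"
  then obtain d' y' where q: "q = (d', y')" and d': "d' \<in> carr D" and y': "y' \<in> ES"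
    unfolding cocycle_ext_simps by auto
  show "p + q \<in> carr (cocycle_ext D C)"
    unfolding simps q using mod_add[OF D d d'] ES_add[OF y y'] by simp
  show "smul (cocycle_ext D C) c (p + q) = smul (cocycle_ext D C) c p + smul (cocycle_ext D C) c q" for c
    unfolding simps q using smul_add[OF D d d'] sS_simps(1) by (simp add: cocycle_ext_simps)
  show "act (cocycle_ext D C) a (p + q) = act (cocycle_ext D C) a p + act (cocycle_ext D C) a q" for a
    unfolding simps q using act_add[OF D d d'] C_add[OF y y']
    by (simp add: cocycle_ext_simps distrib_left algebra_simps)
qed

lemma cocycle_ext_splitting:
  assumes D: "is_mod sH D" and no_ext: "\<not> ext1_nonzero sH (eS_mod sS e \<phi>) D"
    and E: "is_mod sH (cocycle_ext D C)" and C0: "\<And>h. C h 0 = 0"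
  obtains \<sigma> where "klin D (carr D) \<sigma>" "\<And>h x. x \<in> ES \<Longrightarrow> \<sigma> (\<phi> h * x) = act D h (\<sigma> x) + C h x"
proof -
  have eS: "carr (eS_mod sS e \<phi>) = ES" "smul (eS_mod sS e \<phi>) = sS" "act (eS_mod sS e \<phi>) h x = \<phi> h * x"
    for h x unfolding eS_mod_def ES_def by simp_all
  have "mod_hom D (cocycle_ext D C) (\<lambda>d. (d, 0))"
    unfolding mod_hom_def using ES_zero by (simp add: C0 cocycle_ext_simps)
  moreover have "mod_hom (cocycle_ext D C) (eS_mod sS e \<phi>) snd"
    unfolding mod_hom_def eS cocycle_ext_def by auto
  ultimately obtain s where s: "mod_hom (eS_mod sS e \<phi>) (cocycle_ext D C) s"
    and s_snd: "\<forall>x\<in>ES. snd (s x) = x"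
    using no_ext E unfolding ext1_nonzero_def eS by (auto simp: cocycle_ext_simps)
  have s_pair: "x \<in> ES \<Longrightarrow> s x = (fst (s x), x)" for x using s_snd by (metis prod.collapse)
  note sD = s[unfolded mod_hom_def eS]
  show ?thesis
  proof
    show "klin D (carr D) (\<lambda>x. fst (s x))"
      unfolding klin_def
    proof (intro conjI ballI allI)
      fix x assume x: "x \<in> ES"
      show "fst (s x) \<in> carr D" using sD x unfolding cocycle_ext_simps by (metis mem_Times_iff)
      show "fst (s (sS c x)) = smul D c (fst (s x))" for c
        using sD x s_pair[OF x] by (metis fst_conv cocycle_ext_simps(2))
      fix y assume y: "y \<in> ES"
      show "fst (s (x + y)) = fst (s x) + fst (s y)" using sD x y by simp
    qed
    show "fst (s (\<phi> h * x)) = act D h (fst (s x)) + C h x" if x: "x \<in> ES" for h x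
      using sD x s_pair[OF x] by (metis fst_conv cocycle_ext_simps(3))
  qed
qed

lemma is_mod_cocycle_ext_of_hlin_mod:
  assumes N: "is_mod sH N" and D: "is_mod sH D" and A': "sub_mod N A'"
    and \<rho>: "quotient_map N A A' D \<rho>" and g: "klin N (carr N) g" and hg: "hlin_mod N A' g"
  shows "is_mod sH (cocycle_ext D (\<lambda>h x. \<rho> (g (\<phi> h * x) - act N h (g x))))"
proof -
  define cc where "cc = (\<lambda>h x. g (\<phi> h * x) - act N h (g x))"
  have gN: "x \<in> ES \<Longrightarrow> g x \<in> carr N" for x using klin_in[OF g] .
  have cc_in: "x \<in> ES \<Longrightarrow> cc h x \<in> A'" for h x using hg unfolding hlin_mod_def cc_def by blast
  have "cc h (y1 + y2) = cc h y1 + cc h y2" if "y1 \<in> ES" "y2 \<in> ES" for h y1 y2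
    unfolding cc_def using that ES_add ES_phi_mult
    by (simp add: distrib_left klin_add[OF g] act_add[OF N gN gN] algebra_simps)
  moreover have "cc (a + b) y = cc a y + cc b y" if "y \<in> ES" for a b y
    unfolding cc_def using that ES_phi_mult
    by (simp add: phi_add distrib_right klin_add[OF g] act_adds[OF N gN] algebra_simps)
  moreover have "cc (a * b) y = act N a (cc b y) + cc a (\<phi> b * y)" if y: "y \<in> ES" for a b y
    unfolding cc_def using act_diff[OF N gN[OF ES_phi_mult[OF y]] mod_act[OF N gN[OF y]]]
      act_mult[OF N gN[OF y]] by (simp add: phi_mult mult.assoc)
  moreover have "cc 1 y = 0" if "y \<in> ES" for y
    unfolding cc_def using that ES_iff act_one[OF N gN[OF that]] by (simp add: phi_one)
  moreover have "cc (sH c a) y = smul N c (cc a y)" if y: "y \<in> ES" for c a y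
    unfolding cc_def using y ES_phi_mult[OF y]
    by (simp add: phi_smul sS_simps(5)[symmetric] klin_smul[OF g] act_sa[OF N gN]
        smul_diff[OF N gN mod_act[OF N gN]])
  moreover have "cc a (sS c y) = smul N c (cc a y)" if y: "y \<in> ES" for c a y
    unfolding cc_def using y ES_phi_mult[OF y] ES_smul[OF y]
    by (simp add: sS_simps(6)[symmetric] klin_smul[OF g] act_smul[OF N gN]
        smul_diff[OF N gN mod_act[OF N gN]])
  ultimately have "is_mod sH (cocycle_ext D (\<lambda>h x. \<rho> (cc h x)))"
    using quotient_map_carr[OF \<rho>] quotient_map_add[OF \<rho>] quotient_map_act[OF \<rho>]
      quotient_map_smul[OF \<rho>] quotient_map_zero[OF \<rho> A'] cc_in sub_mod_act[OF A']
      ES_phi_mult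
    by (intro is_mod_cocycle_ext[OF D]) simp_all
  then show ?thesis unfolding cc_def .
qed

lemma hlin_mod_correction:
  assumes N: "is_mod sH N" and D: "is_mod sH D" and no_ext: "\<not> ext1_nonzero sH (eS_mod sS e \<phi>) D"
    and A': "sub_mod N A'" and \<rho>: "quotient_map N A A' D \<rho>"
    and B: "sub_mod N B" and A'B: "A' \<subseteq> B" and g: "klin N B g" and hg: "hlin_mod N A' g"
  obtains g' where "klin N B g'" "hlin_mod N A g'" "\<forall>x\<in>ES. g' x - g x \<in> A'"
proof -
  define C where "C = (\<lambda>h x. \<rho> (g (\<phi> h * x) - act N h (g x)))"
  have gN: "klin N (carr N) g" using klin_mono[OF g sub_mod_carr[OF B]] .
  have "C h 0 = 0" for h
    using klin_zero[OF g] act_zero[OF N] quotient_map_zero[OF \<rho> A'] by (simp add: C_def)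
  then obtain \<sigma> where \<sigma>: "klin D (carr D) \<sigma>"
    and \<sigma>_act: "\<And>h x. x \<in> ES \<Longrightarrow> \<sigma> (\<phi> h * x) = act D h (\<sigma> x) + C h x"
    using cocycle_ext_splitting[OF D no_ext is_mod_cocycle_ext_of_hlin_mod[OF N D A' \<rho> gN hg]]
    unfolding C_def by blast
  obtain k where k: "klin N A' k" and \<rho>k: "\<And>x. x \<in> ES \<Longrightarrow> \<rho> (k x) = \<sigma> x"
    using klin_lift[OF N A' \<rho> \<sigma>] by blast
  have kN: "x \<in> ES \<Longrightarrow> k x \<in> carr N" for x using klin_in[OF k] sub_mod_carr[OF A'] by blast
  show ?thesis
  proof
    show "klin N B (\<lambda>x. g x - k x)" using klin_diff[OF N B g klin_mono[OF k A'B]] .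
    show "\<forall>x\<in>ES. (g x - k x) - g x \<in> A'" using sub_mod_neg[OF N A' klin_in[OF k]] by simp
    show "hlin_mod N A (\<lambda>x. g x - k x)"
      unfolding hlin_mod_def
    proof (intro allI ballI)
      fix h x assume x: "x \<in> ES"
      have hx: "\<phi> h * x \<in> ES" using ES_phi_mult[OF x] .
      define c where "c = g (\<phi> h * x) - act N h (g x)"
      define c' where "c' = k (\<phi> h * x) - act N h (k x)"
      have c: "c \<in> A'" using hg x unfolding hlin_mod_def c_def by blast
      have c': "c' \<in> A'" unfolding c'_def
        using sub_mod_diff[OF N A' klin_in[OF k hx] sub_mod_act[OF A' klin_in[OF k x]]] .
      have "g (\<phi> h * x) - k (\<phi> h * x) - act N h (g x - k x) = c - c'"
        unfolding c_def c'_def act_diff[OF N klin_in[OF gN x] kN[OF x]] by (simp add: algebra_simps)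
      moreover have "\<rho> c' = \<sigma> (\<phi> h * x) - act D h (\<sigma> x)"
        unfolding c'_def
        using quotient_map_diff[OF N A' \<rho> klin_in[OF k hx] sub_mod_act[OF A' klin_in[OF k x]]]
          quotient_map_act[OF \<rho> klin_in[OF k x]] \<rho>k[OF x] \<rho>k[OF hx] by simp
      then have "\<rho> (c - c') = 0"
        using \<sigma>_act[OF x] quotient_map_diff[OF N A' \<rho> c c'] unfolding C_def c_def by simp
      ultimately show "g (\<phi> h * x) - k (\<phi> h * x) - act N h (g x - k x) \<in> A"
        using quotient_map_kernel[OF \<rho> sub_mod_diff[OF N A' c c']] by simp
    qed
  qed
qed

(* Every H-map from eS to B/A lifts to B: the form of Ext^1_H(eS, A) = 0 used here. *)
definition lifts_through :: "('k, 'h, 'n::ab_group_add) modl \<Rightarrow> 'n set \<Rightarrow> bool" where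
  "lifts_through N A \<longleftrightarrow>
     (\<forall>B g. sub_mod N B \<longrightarrow> A \<subseteq> B \<longrightarrow> klin N B g \<longrightarrow> hlin_mod N A g \<longrightarrow>
        (\<exists>f. klin N B f \<and> hlin_mod N {0} f \<and> (\<forall>x\<in>ES. f x - g x \<in> A)))"

lemma lifts_through_zero: "lifts_through N {0}"
  unfolding lifts_through_def
proof (intro allI impI)
  fix B g assume "sub_mod N B" "{0} \<subseteq> B" "klin N B g" "hlin_mod N {0} g"
  then show "\<exists>f. klin N B f \<and> hlin_mod N {0} f \<and> (\<forall>x\<in>ES. f x - g x \<in> {0})"
    by (intro exI[of _ g]) simp
qed

lemma lifts_through_extension:
  assumes N: "is_mod sH N" and D: "is_mod sH D" and no_ext: "\<not> ext1_nonzero sH (eS_mod sS e \<phi>) D"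
    and A': "sub_mod N A'" and \<rho>: "quotient_map N A A' D \<rho>" and A: "lifts_through N A"
  shows "lifts_through N A'"
  unfolding lifts_through_def
proof (intro allI impI)
  fix B g assume B: "sub_mod N B" and A'B: "A' \<subseteq> B" and g: "klin N B g" and hg: "hlin_mod N A' g"
  obtain g' where g': "klin N B g'" "hlin_mod N A g'" and g'g: "\<forall>x\<in>ES. g' x - g x \<in> A'"
    using hlin_mod_correction[OF N D no_ext A' \<rho> B A'B g hg] by blast
  have AA': "A \<subseteq> A'" by (rule quotient_map_subset[OF \<rho>])
  obtain f where f: "klin N B f" "hlin_mod N {0} f" and fg': "\<forall>x\<in>ES. f x - g' x \<in> A"
    using A[unfolded lifts_through_def, rule_format, OF B order_trans[OF AA' A'B] g'] by blast
  have "f x - g x \<in> A'" if x: "x \<in> ES" for x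
  proof -
    have "(f x - g' x) + (g' x - g x) \<in> A'"
      using sub_mod_add[OF A'] fg' g'g AA' x by blast
    then show ?thesis by simp
  qed
  then show "\<exists>f. klin N B f \<and> hlin_mod N {0} f \<and> (\<forall>x\<in>ES. f x - g x \<in> A')" using f by blast
qed

lemma lifts_through_filtration:
  assumes N: "is_mod sH N" and D: "\<forall>\<mu>\<in>I. is_mod sH (D \<mu>)"
    and no_ext: "\<forall>\<mu>\<in>I. \<not> ext1_nonzero sH (eS_mod sS e \<phi>) (D \<mu>)"
    and F: "filtration N D I t Nc \<mu>" and j: "j \<le> t"
  shows "lifts_through N (Nc j)"
  using j
proof (induction j)
  case 0
  show ?case unfolding filtration_bot[OF F] by (rule lifts_through_zero)
next
  case (Suc j)
  then have j: "j < t" by simp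
  obtain \<rho> where \<rho>: "quotient_map N (Nc j) (Nc (Suc j)) (D (\<mu> j)) \<rho>"
    using filtration_step[OF F j] by blast
  show ?case
    using lifts_through_extension[OF N _ _ filtration_sub_mod[OF F] \<rho> Suc.IH] D no_ext
      filtration_index[OF F j] j by simp
qed

section \<open>Applying \<open>G\<close> to a filtration\<close>

definition G_submod :: "('k, 'h, 'n::ab_group_add) modl \<Rightarrow> 'n set \<Rightarrow> ('s \<Rightarrow> 'n) set" where
  "G_submod N U = {f \<in> carr (GG N). \<forall>x. f x \<in> U}"

lemma sub_mod_G_submod:
  assumes N: "is_mod sH N" and U: "sub_mod N U"
  shows "sub_mod (GG N) (G_submod N U)"
  unfolding sub_mod_def G_submod_def
  using G_zero[OF N] G_add[OF N] G_smul_closed[OF N] G_act_closed[OF N] sub_modD[OF U]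
  by (auto simp: G_smul G_act)

lemma G_submod_restrict:
  assumes U: "sub_mod N U" and f: "klin N U f" and hf: "hlin_mod N {0} f"
  shows "(\<lambda>x. if x \<in> ES then f x else 0) \<in> G_submod N U"
proof -
  have "(\<lambda>x. if x \<in> ES then f x else 0) \<in> carr (GG N)"
    unfolding Gcarr_iff using klin_mono[OF f sub_mod_carr[OF U]] hf ES_closed
    by (auto simp: klin_def hlin_mod_def)
  then show ?thesis unfolding G_submod_def using klin_in[OF f] sub_mod_zero[OF U] by auto
qed

lemma G_quotient_map_surj:
  assumes N: "is_mod sH N" and A': "sub_mod N A'" and \<rho>: "quotient_map N A A' D \<rho>"
    and A: "lifts_through N A"
  shows "carr (GG D) \<subseteq> (\<lambda>f x. \<rho> (f x)) ` G_submod N A'"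
proof
  fix u assume u: "u \<in> carr (GG D)"
  obtain k where k: "klin N A' k" and \<rho>k: "\<And>x. x \<in> ES \<Longrightarrow> \<rho> (k x) = u x"
    using klin_lift[OF N A' \<rho>] u unfolding Gcarr_iff by blast
  have "hlin_mod N A k"
    unfolding hlin_mod_def
  proof (intro allI ballI)
    fix a x assume x: "x \<in> ES"
    have hx: "\<phi> a * x \<in> ES" by (rule ES_phi_mult[OF x])
    have d: "k (\<phi> a * x) - act N a (k x) \<in> A'"
      using sub_mod_diff[OF N A' klin_in[OF k hx] sub_mod_act[OF A' klin_in[OF k x]]] .
    have "\<rho> (k (\<phi> a * x) - act N a (k x)) = 0"
      using quotient_map_diff[OF N A' \<rho> klin_in[OF k hx] sub_mod_act[OF A' klin_in[OF k x]]]
        quotient_map_act[OF \<rho> klin_in[OF k x]] \<rho>k[OF x] \<rho>k[OF hx] G_apply_act[OF u x] by simp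
    then show "k (\<phi> a * x) - act N a (k x) \<in> A" using quotient_map_kernel[OF \<rho> d] by simp
  qed
  then obtain f where f: "klin N A' f" "hlin_mod N {0} f" and fk: "\<forall>x\<in>ES. f x - k x \<in> A"
    using A[unfolded lifts_through_def, rule_format, OF A' quotient_map_subset[OF \<rho>] k] by blast
  let ?F = "\<lambda>x. if x \<in> ES then f x else 0"
  have "\<rho> (?F x) = u x" for x
  proof (cases "x \<in> ES")
    case True
    have fkA': "f x - k x \<in> A'" using fk True quotient_map_subset[OF \<rho>] by blast
    have "\<rho> (f x) = \<rho> (k x + (f x - k x))" by simp
    also have "\<dots> = \<rho> (k x) + \<rho> (f x - k x)" by (rule quotient_map_add[OF \<rho> klin_in[OF k True] fkA'])
    also have "\<dots> = u x" using \<rho>k[OF True] quotient_map_kernel[OF \<rho> fkA'] fk True by simp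
    finally show ?thesis using True by simp
  next
    case False
    then show ?thesis using G_apply_outside[OF u] quotient_map_zero[OF \<rho> A'] by simp
  qed
  then have "u = (\<lambda>f x. \<rho> (f x)) ?F" by (simp add: fun_eq_iff)
  then show "u \<in> (\<lambda>f x. \<rho> (f x)) ` G_submod N A'" using G_submod_restrict[OF A' f] by (rule image_eqI)
qed

lemma quotient_map_G:
  assumes N: "is_mod sH N" and A': "sub_mod N A'" and \<rho>: "quotient_map N A A' D \<rho>"
    and A: "lifts_through N A"
  shows "quotient_map (GG N) (G_submod N A) (G_submod N A') (GG D) (\<lambda>f x. \<rho> (f x))"
proof (rule quotient_mapI)
  have \<rho>0: "\<rho> 0 = 0" by (rule quotient_map_zero[OF \<rho> A'])
  fix f assume "f \<in> G_submod N A'"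
  then have f: "f \<in> carr (GG N)" and fA': "\<And>x. f x \<in> A'" unfolding G_submod_def by auto
  show "(\<lambda>x. \<rho> (f x)) \<in> carr (GG D)"
  proof (rule GcarrI)
    fix x assume x: "x \<in> ES"
    show "\<rho> (f x) \<in> carr D" by (rule quotient_map_carr[OF \<rho> fA'])
    show "\<rho> (f (x + y)) = \<rho> (f x) + \<rho> (f y)" if "y \<in> ES" for y
      using G_apply_add[OF f x that] quotient_map_add[OF \<rho> fA' fA'] by simp
    show "\<rho> (f (sS c x)) = smul D c (\<rho> (f x))" for c
      using G_apply_smul[OF f x] quotient_map_smul[OF \<rho> fA'] by simp
    show "\<rho> (f (\<phi> a * x)) = act D a (\<rho> (f x))" for a
      using G_apply_act[OF f x] quotient_map_act[OF \<rho> fA'] by simp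
  next
    fix x assume "x \<notin> ES"
    then show "\<rho> (f x) = 0" using G_apply_outside[OF f] \<rho>0 by simp
  qed
  show "(\<lambda>x. \<rho> (smul (GG N) c f x)) = smul (GG D) c (\<lambda>x. \<rho> (f x))" for c
    by (rule ext) (simp add: G_smul quotient_map_smul[OF \<rho> fA'] \<rho>0)
  show "(\<lambda>x. \<rho> (act (GG N) s f x)) = act (GG D) s (\<lambda>x. \<rho> (f x))" for s
    by (rule ext) (simp add: G_act \<rho>0)
  have "(\<lambda>x. \<rho> (f x)) = 0 \<longleftrightarrow> (\<forall>x. f x \<in> A)"
    using quotient_map_kernel[OF \<rho> fA'] by (simp add: fun_eq_iff)
  then show "(\<lambda>x. \<rho> (f x)) = 0 \<longleftrightarrow> f \<in> G_submod N A" unfolding G_submod_def using f by blast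
  fix g assume "g \<in> G_submod N A'"
  then have gA': "\<And>x. g x \<in> A'" unfolding G_submod_def by auto
  show "(\<lambda>x. \<rho> ((f + g) x)) = (\<lambda>x. \<rho> (f x)) + (\<lambda>x. \<rho> (g x))"
    by (rule ext) (simp add: quotient_map_add[OF \<rho> fA' gA'])
next
  show "G_submod N A \<subseteq> G_submod N A'" unfolding G_submod_def using quotient_map_subset[OF \<rho>] by auto
  show "carr (GG D) \<subseteq> (\<lambda>f x. \<rho> (f x)) ` G_submod N A'"
    by (rule G_quotient_map_surj[OF N A' \<rho> A])
qed

lemma filtration_G:
  assumes N: "is_mod sH N" and D: "\<forall>\<mu>\<in>I. is_mod sH (D \<mu>)"
    and no_ext: "\<forall>\<mu>\<in>I. \<not> ext1_nonzero sH (eS_mod sS e \<phi>) (D \<mu>)"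
    and F: "filtration N D I t Nc \<mu>"
  shows "filtration (GG N) (\<lambda>\<mu>. GG (D \<mu>)) I t (\<lambda>i. G_submod N (Nc i)) \<mu>"
  unfolding filtration_def
proof (intro conjI allI impI)
  show "G_submod N (Nc 0) = {0}"
    unfolding G_submod_def filtration_bot[OF F] using G_zero[OF N] by (auto simp: fun_eq_iff)
  have "f x \<in> carr N" if "f \<in> carr (GG N)" for f x
    using G_apply_carr[OF that] G_apply_outside[OF that] mod_zero[OF N] by (cases "x \<in> ES") simp_all
  then show "G_submod N (Nc t) = carr (GG N)"
    unfolding G_submod_def filtration_top[OF F] by blast
  show "sub_mod (GG N) (G_submod N (Nc i))" if "i \<le> t" for i
    using sub_mod_G_submod[OF N filtration_sub_mod[OF F that]] .
  fix i assume i: "i < t"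
  obtain \<rho> where \<rho>: "quotient_map N (Nc i) (Nc (Suc i)) (D (\<mu> i)) \<rho>"
    using filtration_step[OF F i] by blast
  show "G_submod N (Nc i) \<subseteq> G_submod N (Nc (Suc i))"
    unfolding G_submod_def using quotient_map_subset[OF \<rho>] by auto
  show "\<mu> i \<in> I" using filtration_index[OF F i] .
  have "sub_mod N (Nc (Suc i))" using filtration_sub_mod[OF F] i by simp
  moreover have "lifts_through N (Nc i)" using lifts_through_filtration[OF N D no_ext F] i by simp
  ultimately show "\<exists>f. quotient_map (GG N) (G_submod N (Nc i)) (G_submod N (Nc (Suc i))) (GG (D (\<mu> i))) f"
    using quotient_map_G[OF N _ \<rho>] by blast
qed

end

theorem lemma8p4:
  fixes sS :: "'k::field \<Rightarrow> 's::ring_1 \<Rightarrow> 's"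
    and sH :: "'k \<Rightarrow> 'h::ring_1 \<Rightarrow> 'h"
    and e :: 's and \<phi> :: "'h \<Rightarrow> 's"
    and Sp :: "'l::order \<Rightarrow> ('k, 'h, 'v::ab_group_add) modl"
    and Lam :: "'l set" and hs hst :: "'h \<Rightarrow> 'h" and tr :: "'l \<Rightarrow> 'l"
  assumes "kalg sS" and "kalg sH" and "e * e = e" and "corner_iso sS sH e \<phi>"
    and "admits_dual_specht sH Sp Lam hs hst tr"
    and "\<forall>a\<in>Lam. \<not> ext1_nonzero sH (eS_mod sS e \<phi>) (dual_mod hst (Sp a))"
  shows "(\<forall>N :: ('k, 'h, 'n::ab_group_add) modl. is_mod sH N \<longrightarrow>
            (has_filt N (\<lambda>\<mu>. dual_mod hst (Sp \<mu>)) Lam \<longleftrightarrow>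
             has_filt (Gmod sS e \<phi> N) (\<lambda>\<mu>. Gmod sS e \<phi> (dual_mod hst (Sp \<mu>))) Lam))
       \<and> (\<forall>M :: ('k, 's, 'm::ab_group_add) modl. is_mod sS M \<longrightarrow>
            has_filt M (\<lambda>\<mu>. Gmod sS e \<phi> (dual_mod hst (Sp \<mu>))) Lam \<longrightarrow>
            mod_iso (Gmod sS e \<phi> (Fmod e \<phi> M)) M)"
proof -
  interpret schur sS sH e \<phi> using assms(1,3,4) by (rule schur.intro)
  have D: "\<forall>\<mu>\<in>Lam. is_mod sH (dual_mod hst (Sp \<mu>))" using is_mod_dual_specht[OF assms(5)] by blast
  show ?thesis
    unfolding has_filt_iff_filtration
    using filtration_G[OF _ D assms(6)] filtration_eval_e[OF _ D] GF_iso[OF _ D] by blast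
qed

end
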